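(* Let $f\in L^{1}$. Suppose the matrices $A=(a_{n,k})$, $B=(b_{n,k})$ (as in the context) satisfy, with constants independent of $n,r,s,l$: (i) $a_{n,n}\ll \frac{1}{n+1}$ for all $n$; (ii) $\frac{1}{s+1}\sum_{r=0}^{s}a_{n,r}\ll a_{n,s}$ for $0\le s\le n$; (iii) $\left|a_{n,r}b_{r,r-l}-a_{n,r+1}b_{r+1,r+1-l}\right|\ll \frac{a_{n,r}}{(r+1)^{2}}$ for $0\le l\le r\le n-1$. Then for every natural $n$ and every real $x$, $$\left|\widetilde{T}_{n,A,B}f(x)-\widetilde{f}\!\left(x,\tfrac{\pi}{n+1}\right)\right|\ll \sum_{r=0}^{n}a_{n,r}\left[\frac{1}{r+1}\sum_{k=0}^{r}\widetilde{\bar{w}}_{x}f\!\left(\frac{\pi}{k+1}\right)\right].$$ Moreover, if $x$ is a point at which $\widetilde f(x)$ exists and $$\frac{1}{\pi}\int_{0}^{\frac{\pi}{n+1}}\frac{|\psi_{x}(t)|}{t}\,dt\ll \widetilde{w}_{x}f\!\left(\frac{\pi}{n+1}\right)\quad\text{for all natural } n,$$ then for every natural $n$ $$\left|\widetilde{T}_{n,A,B}f(x)-\widetilde{f}(x)\right|\ll \sum_{r=0}^{n}a_{n,r}\left[\frac{1}{r+1}\sum_{k=0}^{r}\widetilde{\bar{w}}_{x}f\!\left(\frac{\pi}{k+1}\right)\right].$$ The implied constants in the conclusions depend only on the implied constants in the hypotheses.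
   Context: $L^{p}$ ($1\le p<\infty$; resp. $p=\infty$) is the space of $2\pi$-periodic real functions that are $p$-th power Lebesgue integrable (resp. essentially bounded) on $[-\pi,\pi]$, with the usual norm. For $f\in L^1$ with Fourier coefficients $a_\nu(f),b_\nu(f)$, the conjugate partial sums are $\widetilde S_k f(x)=\sum_{\nu=1}^{k}(a_\nu(f)\sin\nu x-b_\nu(f)\cos\nu x)$ ($\widetilde S_0f=0$). Put $\psi_x(t)=f(x+t)-f(x-t)$, $\widetilde f(x,\epsilon)=-\frac{1}{\pi}\int_{\epsilon}^{\pi}\psi_x(t)\frac12\cot\frac t2\,dt$ for $0<\epsilon\le\pi$, and $\widetilde f(x)=\lim_{\epsilon\to0^+}\widetilde f(x,\epsilon)$ (where it exists). $A=(a_{n,k})$, $B=(b_{n,k})$ are infinite lower triangular real matrices with $a_{n,k},b_{n,k}\ge0$ for $0\le k\le n$, $a_{n,k}=b_{n,k}=0$ for $k>n$, and $\sum_{k=0}^n a_{n,k}=\sum_{k=0}^n b_{n,k}=1$ for all $n\ge0$. Define $\widetilde T_{n,A,B}f(x)=\sum_{r=0}^{n}\sum_{k=0}^{r}a_{n,r}b_{r,k}\widetilde S_kf(x)$. Pointwise moduli: $\widetilde w_xf(\delta)=\frac1\delta\int_0^\delta|\psi_x(u)|\,du$ and $\widetilde{\bar w}_xf(\delta)=\sup_{0<t\le\delta}\frac1t\int_0^t|\psi_x(u)|\,du$. Notation: $I_1\ll I_2$ means $I_1\le K I_2$ for a positive constant $K$. *)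

theory Defs
  imports "HOL-Analysis.Analysis"
begin

definition L1 :: "(real \<Rightarrow> real) \<Rightarrow> bool" where
  "L1 f \<longleftrightarrow> (\<forall>x. f (x + 2 * pi) = f x) \<and> set_integrable lborel {-pi..pi} f"

definition fourier_a :: "(real \<Rightarrow> real) \<Rightarrow> nat \<Rightarrow> real" where
  "fourier_a f \<nu> = (1 / pi) * (LINT t:{-pi..pi}|lborel. f t * cos (real \<nu> * t))"

definition fourier_b :: "(real \<Rightarrow> real) \<Rightarrow> nat \<Rightarrow> real" where
  "fourier_b f \<nu> = (1 / pi) * (LINT t:{-pi..pi}|lborel. f t * sin (real \<nu> * t))"

text \<open>Conjugate partial sums; the empty sum gives the value 0 for k = 0.\<close>
definition conj_partial_sum :: "(real \<Rightarrow> real) \<Rightarrow> nat \<Rightarrow> real \<Rightarrow> real" where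
  "conj_partial_sum f k x =
     (\<Sum>\<nu>\<in>{1..k}. fourier_a f \<nu> * sin (real \<nu> * x) - fourier_b f \<nu> * cos (real \<nu> * x))"

definition psi :: "(real \<Rightarrow> real) \<Rightarrow> real \<Rightarrow> real \<Rightarrow> real" where
  "psi f x t = f (x + t) - f (x - t)"

definition conj_trunc :: "(real \<Rightarrow> real) \<Rightarrow> real \<Rightarrow> real \<Rightarrow> real" where
  "conj_trunc f x \<epsilon> = - (1 / pi) * (LINT t:{\<epsilon>..pi}|lborel. psi f x t * (1/2) * cot (t / 2))"

definition admissible_matrix :: "(nat \<Rightarrow> nat \<Rightarrow> real) \<Rightarrow> bool" where
  "admissible_matrix a \<longleftrightarrow>
     (\<forall>n k. k \<le> n \<longrightarrow> a n k \<ge> 0) \<and> (\<forall>n k. n < k \<longrightarrow> a n k = 0) \<and>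
     (\<forall>n. (\<Sum>k=0..n. a n k) = 1)"

definition T_AB :: "(nat \<Rightarrow> nat \<Rightarrow> real) \<Rightarrow> (nat \<Rightarrow> nat \<Rightarrow> real) \<Rightarrow> (real \<Rightarrow> real) \<Rightarrow> nat \<Rightarrow> real \<Rightarrow> real" where
  "T_AB a b f n x = (\<Sum>r=0..n. \<Sum>k=0..r. a n r * b r k * conj_partial_sum f k x)"

definition w_mod :: "(real \<Rightarrow> real) \<Rightarrow> real \<Rightarrow> real \<Rightarrow> real" where
  "w_mod f x \<delta> = (1 / \<delta>) * (LINT u:{0..\<delta>}|lborel. \<bar>psi f x u\<bar>)"

text \<open>The supremum may be infinite, so it is taken in the extended reals.\<close>
definition wbar_mod :: "(real \<Rightarrow> real) \<Rightarrow> real \<Rightarrow> real \<Rightarrow> ereal" where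
  "wbar_mod f x \<delta> = (SUP t\<in>{0<..\<delta>}. ereal ((1 / t) * (LINT u:{0..t}|lborel. \<bar>psi f x u\<bar>)))"

definition rhs_sum :: "(nat \<Rightarrow> nat \<Rightarrow> real) \<Rightarrow> (real \<Rightarrow> real) \<Rightarrow> nat \<Rightarrow> real \<Rightarrow> ereal" where
  "rhs_sum a f n x = (\<Sum>r=0..n. ereal (a n r) *
      (ereal (1 / (real r + 1)) * (\<Sum>k=0..r. wbar_mod f x (pi / (real k + 1)))))"

end

theory Submission
  imports Defs
begin

text \<open>
  With $\psi_x(t) = f(x+t) - f(x-t)$, both
  $\widetilde T_{n,A,B}f(x)$ and the truncated conjugate function $\widetilde f(x,\epsilon)$ are
  $-\frac1\pi\int \psi_x$ against explicit kernels on $[0,\pi]$: the mean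
  $K_n(t) = \sum_r\sum_k a_{n,r}b_{r,k}\widetilde D_k(t)$ of the conjugate Dirichlet kernels, and
  $\tfrac12\cot(t/2)$. On $[0,\pi/(n+1)]$ the kernel $K_n$ is $O(n)$. On $[\pi/(n+1),\pi]$ the two
  kernels differ by $-H_n(t)/(2\sin(t/2))$, where $H_n$ is a double mean of $\cos((k+\tfrac12)t)$;
  regrouping $H_n$ along the diagonals of $B$ and applying Abel summation with hypothesis (iii)
  bounds it on each piece $[\pi/(k+1),\pi/k]$ by an explicit weight. Both parts are thus controlled
  by the masses $F(k) = \int_0^{\pi/k}|\psi_x|$, and summation by parts together with hypotheses
  (i) and (ii) converts the resulting sums into the averages of $W(k) = \bar w_x f(\pi/k)$. For the
  second statement the extra hypothesis bounds $|\widetilde f(x,\pi/(n+1)) - \widetilde f(x)|$ by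
  $K_4\,w_x f(\pi/(n+1)) \le K_4 W(n+1)$.
\<close>

section \<open>Integrability of periodic $L^1$ functions on bounded intervals\<close>

lemma periodic_shift_int:
  assumes per: "\<And>x. f (x + 2 * pi) = f x"
  shows "f (y + 2 * pi * real_of_int m) = f y"
proof -
  have nat_shift: "f (z + 2 * pi * real n) = f z" for z n
  proof (induction n)
    case 0 then show ?case by simp
  next
    case (Suc n)
    have "z + 2 * pi * real (Suc n) = (z + 2 * pi * real n) + 2 * pi" by (simp add: algebra_simps)
    then show ?case using per[of "z + 2 * pi * real n"] Suc by (metis add.assoc)
  qed
  show ?thesis
  proof (cases "m \<ge> 0")
    case True
    then show ?thesis using nat_shift[of y "nat m"] by simp
  next
    case False
    then have "y = (y + 2 * pi * real_of_int m) + 2 * pi * real (nat (- m))" by simp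
    then show ?thesis using nat_shift[of "y + 2 * pi * real_of_int m" "nat (-m)"] by metis
  qed
qed

lemma L1_set_integrable_period_translate:
  assumes "L1 f"
  shows "set_integrable lborel {-pi + 2*pi*real_of_int m .. pi + 2*pi*real_of_int m} f"
proof -
  let ?s = "2*pi*real_of_int m"
  have i: "integrable lborel (\<lambda>y. indicator {-pi..pi} y *\<^sub>R f y)"
    using assms unfolding L1_def set_integrable_def by auto
  have "integrable lborel (\<lambda>y. indicator {-pi..pi} (- ?s + 1 * y) *\<^sub>R f (- ?s + 1 * y))"
    by (rule lborel_integrable_real_affine[OF i]) simp
  moreover have "f (- ?s + 1 * y) = f y" for y
    using periodic_shift_int[of f "- ?s + 1 * y" m] assms unfolding L1_def by simp
  moreover have "indicator {-pi..pi} (- ?s + 1 * y) = (indicator {-pi + ?s .. pi + ?s} y :: real)" for y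
    by (auto simp: indicator_def)
  ultimately show ?thesis unfolding set_integrable_def by simp
qed

lemma L1_set_integrable_symmetric:
  assumes "L1 f"
  shows "set_integrable lborel {-pi - 2*pi*real N .. pi + 2*pi*real N} f"
proof (induction N)
  case 0
  then show ?case using L1_set_integrable_period_translate[OF assms, of 0] by simp
next
  case (Suc N)
  let ?I = "\<lambda>m. {-pi + 2*pi*real_of_int m .. pi + 2*pi*real_of_int m}"
  have "{-pi - 2*pi*real (Suc N) .. pi + 2*pi*real (Suc N)} =
      (?I (- int N - 1) \<union> {-pi - 2*pi*real N .. pi + 2*pi*real N}) \<union> ?I (int N + 1)"
  proof -
    have "0 \<le> pi * (real N * 2)" by simp
    then show ?thesis using pi_gt3 by (auto simp: algebra_simps; smt (verit))
  qed
  moreover have "set_integrable lborel ((?I (- int N - 1) \<union> {-pi - 2*pi*real N .. pi + 2*pi*real N}) \<union> ?I (int N + 1)) f"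
    by (intro set_integrable_Un L1_set_integrable_period_translate[OF assms] Suc) auto
  ultimately show ?case by simp
qed

lemma L1_set_integrable:
  assumes "L1 f"
  shows "set_integrable lborel {a..b} f"
proof -
  obtain N :: nat where N: "real N \<ge> \<bar>a\<bar> + \<bar>b\<bar>" using real_arch_simple by blast
  have "pi \<ge> 1" using pi_gt3 by simp
  then have "2*pi*real N \<ge> real N" using mult_left_mono[of 1 "2*pi" "real N"] by (simp add: algebra_simps)
  then have "{a..b} \<subseteq> {-pi - 2*pi*real N .. pi + 2*pi*real N}"
    using N \<open>pi \<ge> 1\<close> by auto
  then show ?thesis using set_integrable_subset[OF L1_set_integrable_symmetric[OF assms, of N]] by auto
qed

lemma set_integrable_mult_continuous:
  fixes g h :: "real \<Rightarrow> real"
  assumes g: "set_integrable lborel {a..b} g" and h: "continuous_on {a..b} h"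
  shows "set_integrable lborel {a..b} (\<lambda>t. g t * h t)"
proof -
  have "compact (h ` {a..b})" by (rule compact_continuous_image[OF h]) simp
  then obtain B where B: "B > 0" "\<forall>y\<in>h ` {a..b}. norm y \<le> B"
    using compact_imp_bounded bounded_pos by metis
  have m1: "(\<lambda>x. indicator {a..b} x *\<^sub>R g x) \<in> borel_measurable lborel"
    using g unfolding set_integrable_def by (rule borel_measurable_integrable)
  have m2: "(\<lambda>x. indicator {a..b} x *\<^sub>R h x) \<in> borel_measurable lborel"
    using borel_measurable_continuous_on_indicator[OF _ h] by simp
  have "(\<lambda>x. indicator {a..b} x *\<^sub>R (g x * h x)) = (\<lambda>x. (indicator {a..b} x *\<^sub>R g x) * (indicator {a..b} x *\<^sub>R h x))"
    by (auto simp: indicator_def)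
  then have m: "set_borel_measurable lborel {a..b} (\<lambda>t. g t * h t)"
    unfolding set_borel_measurable_def using m1 m2 by simp
  show ?thesis
  proof (rule set_integrable_bound[OF _ m])
    show "set_integrable lborel {a..b} (\<lambda>t. B * g t)" using g by simp
    show "AE x in lborel. x \<in> {a..b} \<longrightarrow> norm (g x * h x) \<le> norm (B * g x)"
    proof (rule AE_I2, rule impI)
      fix x assume "x \<in> {a..b}"
      then have "\<bar>h x\<bar> \<le> B" using B by auto
      then show "norm (g x * h x) \<le> norm (B * g x)"
        using B mult_left_mono[of "\<bar>h x\<bar>" B "\<bar>g x\<bar>"] by (simp add: abs_mult mult.commute)
    qed
  qed
qed

lemma L1_set_integrable_translates:
  fixes f :: "real \<Rightarrow> real"
  assumes "L1 f"
  shows "set_integrable lborel {a..b} (\<lambda>t. f (x + t))" "set_integrable lborel {a..b} (\<lambda>t. f (x - t))"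
proof -
  have "integrable lborel (\<lambda>t. indicator {x+a..x+b} (x + 1 * t) *\<^sub>R f (x + 1 * t))"
    using L1_set_integrable[OF assms] unfolding set_integrable_def
    by (intro lborel_integrable_real_affine) auto
  moreover have "(\<lambda>t. indicator {x+a..x+b} (x + 1 * t) *\<^sub>R f (x + 1 * t)) = (\<lambda>t. indicator {a..b} t *\<^sub>R f (x + t))"
    by (auto simp: indicator_def)
  ultimately show "set_integrable lborel {a..b} (\<lambda>t. f (x + t))" unfolding set_integrable_def by simp
  have "integrable lborel (\<lambda>t. indicator {x-b..x-a} (x + (-1) * t) *\<^sub>R f (x + (-1) * t))"
    using L1_set_integrable[OF assms] unfolding set_integrable_def
    by (intro lborel_integrable_real_affine) auto
  moreover have "(\<lambda>t. indicator {x-b..x-a} (x + (-1) * t) *\<^sub>R f (x + (-1) * t)) = (\<lambda>t. indicator {a..b} t *\<^sub>R f (x - t))"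
    by (auto simp: indicator_def)
  ultimately show "set_integrable lborel {a..b} (\<lambda>t. f (x - t))" unfolding set_integrable_def by simp
qed

lemma psi_set_integrable:
  assumes "L1 f"
  shows "set_integrable lborel {a..b} (psi f x)"
  unfolding psi_def using L1_set_integrable_translates[OF assms] by (intro set_integral_diff) auto

lemma abs_psi_set_integrable:
  assumes "L1 f"
  shows "set_integrable lborel {a..b} (\<lambda>t. \<bar>psi f x t\<bar>)"
  using set_integrable_abs[OF psi_set_integrable[OF assms]] .

text \<open>On a compact interval a Lebesgue integrable function is Henstock--Kurzweil integrable
  with the same integral; most computations below are done with the latter.\<close>
lemma set_integrable_HK:
  fixes g :: "real \<Rightarrow> real"
  assumes "set_integrable lborel {a..b} g"
  shows "g integrable_on {a..b}" "(LINT t:{a..b}|lborel. g t) = integral {a..b} g"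
  using set_borel_integral_eq_integral[OF assms] by auto

lemma psi_mult_continuous_integrable_on:
  assumes "L1 f" "continuous_on {a..b} h"
  shows "(\<lambda>t. psi f x t * h t) integrable_on {a..b}"
  using set_integrable_HK(1)[OF set_integrable_mult_continuous[OF psi_set_integrable[OF assms(1)] assms(2)]] .

lemma abs_psi_mult_continuous_integrable_on:
  assumes "L1 f" "continuous_on {a..b} h"
  shows "(\<lambda>t. \<bar>psi f x t\<bar> * h t) integrable_on {a..b}"
  using set_integrable_HK(1)[OF set_integrable_mult_continuous[OF abs_psi_set_integrable[OF assms(1)] assms(2)]] .

lemma abs_psi_integrable_on:
  assumes "L1 f"
  shows "(\<lambda>t. \<bar>psi f x t\<bar>) integrable_on {a..b}"
  using set_integrable_HK(1)[OF abs_psi_set_integrable[OF assms]] .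

section \<open>Integral representations\<close>

lemma periodic_integral_shift:
  fixes Q :: "real \<Rightarrow> real"
  assumes per: "\<And>u. Q (u + 2 * pi) = Q u" and int: "\<And>a b. Q integrable_on {a..b}"
  shows "integral {c..c + 2*pi} Q = integral {-pi..pi} Q"
proof -
  define J where "J a = integral {a..a + 2*pi} Q" for a
  have small_shift: "J (a + s) = J a" if "0 \<le> s" "s \<le> 2*pi" for a s
  proof -
    have e1: "integral {a..a+s} Q + integral {a+s..a+2*pi} Q = J a"
      unfolding J_def using Henstock_Kurzweil_Integration.integral_combine[of a "a+s" "a+2*pi" Q] that int by auto
    have e2: "integral {a+s..a+2*pi} Q + integral {a+2*pi..a+s+2*pi} Q = J (a + s)"
      unfolding J_def using Henstock_Kurzweil_Integration.integral_combine[of "a+s" "a+2*pi" "a+s+2*pi" Q] that int by auto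
    have "Q \<circ> (+) (2*pi) = Q" using per by (auto simp: add.commute)
    then have "integral {a+2*pi..a+s+2*pi} Q = integral {a..a+s} Q"
      using integral_shift_Icc_real[of a "a+s" Q "2*pi"] by (simp add: add.commute add.left_commute)
    then show ?thesis using e1 e2 by simp
  qed
  have J_periodic: "J (a + 2 * pi) = J a" for a using small_shift[of "2*pi" a] by simp
  define m where "m = \<lfloor>(c + pi) / (2*pi)\<rfloor>"
  define s where "s = (c + pi) - 2*pi*real_of_int m"
  have "real_of_int m \<le> (c + pi) / (2*pi)" "(c + pi) / (2*pi) < real_of_int m + 1"
    unfolding m_def by linarith+
  then have s: "0 \<le> s" "s \<le> 2*pi" unfolding s_def using pi_gt_zero by (simp_all add: field_simps)
  have "c = (-pi + 2*pi*real_of_int m) + s" unfolding s_def by simp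
  then have "J c = J (-pi + 2*pi*real_of_int m)" using small_shift[OF s] by simp
  also have "\<dots> = J (-pi)" by (rule periodic_shift_int[where f=J]) (rule J_periodic)
  finally show ?thesis unfolding J_def by simp
qed

lemma sin_nat_periodic: "sin (real \<nu> * (u + 2 * pi)) = sin (real \<nu> * u)"
proof -
  have "real \<nu> * (u + 2 * pi) = real \<nu> * u + 2 * pi * real_of_int (int \<nu>)" by (simp add: algebra_simps)
  then show ?thesis using periodic_shift_int[of sin "real \<nu> * u" "int \<nu>"] by simp
qed

text \<open>Translating to $x$ and folding $[-\pi,0]$ onto $[0,\pi]$ turns an integral against
  $\sin(\nu(t-x))$ into an integral of $\psi_x$.\<close>
lemma integral_sin_translate_fold:
  assumes L: "L1 f"
  shows "integral {-pi..pi} (\<lambda>t. f t * sin (real \<nu> * (t - x)))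
       = integral {0..pi} (\<lambda>t. psi f x t * sin (real \<nu> * t))"
proof -
  define Q where "Q u = f (x + u) * sin (real \<nu> * u)" for u
  have Q_int: "Q integrable_on {a..b}" for a b
    unfolding Q_def
    by (rule set_integrable_HK(1)[OF set_integrable_mult_continuous[OF L1_set_integrable_translates(1)[OF L]]])
      (auto intro!: continuous_intros)
  have f_per: "f (y + 2*pi) = f y" for y using L unfolding L1_def by auto
  have Q_per: "Q (u + 2*pi) = Q u" for u
    using f_per[of "x + u"] sin_nat_periodic[of \<nu> u] unfolding Q_def by (simp add: add.assoc)
  have "integral {-pi..pi} (\<lambda>t. f t * sin (real \<nu> * (t - x))) = integral {-pi-x..pi-x} Q"
    using integral_shift_Icc_real[of "-pi-x" "pi-x" "\<lambda>t. f t * sin (real \<nu> * (t - x))" x]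
    by (simp add: o_def Q_def[abs_def])
  also have "\<dots> = integral {-pi..pi} Q"
    using periodic_integral_shift[of Q "-pi-x", OF Q_per Q_int] by (simp add: algebra_simps)
  also have "\<dots> = integral {-pi..0} Q + integral {0..pi} Q"
    by (rule Henstock_Kurzweil_Integration.integral_combine[symmetric]) (use Q_int in auto)
  also have "integral {-pi..0} Q = integral {0..pi} (\<lambda>u. Q (- u))"
    using Henstock_Kurzweil_Integration.integral_reflect_real[where a=0 and b=pi and f="\<lambda>u. Q (- u)"] by simp
  also have "integral {0..pi} (\<lambda>u. Q (- u)) + integral {0..pi} Q = integral {0..pi} (\<lambda>u. Q (- u) + Q u)"
  proof -
    have "(\<lambda>u. Q (- u)) integrable_on {0..pi}"
      using Q_int[of "-pi" 0] Henstock_Kurzweil_Integration.integrable_reflect_real[where f="\<lambda>u. Q (- u)" and a=0 and b=pi] by simp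
    then show ?thesis by (subst integral_add) (use Q_int in auto)
  qed
  also have "\<dots> = integral {0..pi} (\<lambda>t. psi f x t * sin (real \<nu> * t))"
    by (rule integral_cong) (simp add: Q_def psi_def algebra_simps)
  finally show ?thesis .
qed

lemma conj_coefficient_rep:
  assumes L: "L1 f"
  shows "fourier_a f \<nu> * sin (real \<nu> * x) - fourier_b f \<nu> * cos (real \<nu> * x)
     = - (1 / pi) * integral {0..pi} (\<lambda>t. psi f x t * sin (real \<nu> * t))"
proof -
  have "continuous_on {-pi..pi} (\<lambda>t. cos (real \<nu> * t))" by (auto intro!: continuous_intros)
  from set_integrable_HK[OF set_integrable_mult_continuous[OF L1_set_integrable[OF L] this]]
  have cos_coef: "(\<lambda>t. f t * cos (real \<nu> * t)) integrable_on {-pi..pi}"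
    "fourier_a f \<nu> = (1/pi) * integral {-pi..pi} (\<lambda>t. f t * cos (real \<nu> * t))"
    unfolding fourier_a_def by auto
  have "continuous_on {-pi..pi} (\<lambda>t. sin (real \<nu> * t))" by (auto intro!: continuous_intros)
  from set_integrable_HK[OF set_integrable_mult_continuous[OF L1_set_integrable[OF L] this]]
  have sin_coef: "(\<lambda>t. f t * sin (real \<nu> * t)) integrable_on {-pi..pi}"
    "fourier_b f \<nu> = (1/pi) * integral {-pi..pi} (\<lambda>t. f t * sin (real \<nu> * t))"
    unfolding fourier_b_def by auto
  have "fourier_a f \<nu> * sin (real \<nu> * x) - fourier_b f \<nu> * cos (real \<nu> * x)
      = (1/pi) * (integral {-pi..pi} (\<lambda>t. f t * cos (real \<nu> * t)) * sin (real \<nu> * x)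
          - integral {-pi..pi} (\<lambda>t. f t * sin (real \<nu> * t)) * cos (real \<nu> * x))"
    using cos_coef sin_coef by (simp add: algebra_simps)
  also have "integral {-pi..pi} (\<lambda>t. f t * cos (real \<nu> * t)) * sin (real \<nu> * x)
          - integral {-pi..pi} (\<lambda>t. f t * sin (real \<nu> * t)) * cos (real \<nu> * x)
      = integral {-pi..pi} (\<lambda>t. f t * cos (real \<nu> * t) * sin (real \<nu> * x)
          - f t * sin (real \<nu> * t) * cos (real \<nu> * x))"
    by (subst integral_diff) (use cos_coef sin_coef integrable_on_mult_left in auto)
  also have "\<dots> = - integral {-pi..pi} (\<lambda>t. f t * sin (real \<nu> * (t - x)))"
    by (subst integral_neg[symmetric]) (auto intro!: integral_cong simp: sin_diff algebra_simps)
  finally show ?thesis using integral_sin_translate_fold[OF L] by simp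
qed

section \<open>The kernels\<close>

text \<open>The conjugate Dirichlet kernel, its mean under the matrices $A$ and $B$, and the
  cosine mean that appears in its closed form.\<close>
definition conj_dirichlet :: "nat \<Rightarrow> real \<Rightarrow> real" where
  "conj_dirichlet k t = (\<Sum>\<nu>\<in>{1..k}. sin (real \<nu> * t))"

definition mean_kernel :: "(nat \<Rightarrow> nat \<Rightarrow> real) \<Rightarrow> (nat \<Rightarrow> nat \<Rightarrow> real) \<Rightarrow> nat \<Rightarrow> real \<Rightarrow> real" where
  "mean_kernel a b n t = (\<Sum>r=0..n. \<Sum>k=0..r. a n r * b r k * conj_dirichlet k t)"

definition cos_mean :: "(nat \<Rightarrow> nat \<Rightarrow> real) \<Rightarrow> (nat \<Rightarrow> nat \<Rightarrow> real) \<Rightarrow> nat \<Rightarrow> real \<Rightarrow> real" where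
  "cos_mean a b n t = (\<Sum>r=0..n. \<Sum>k=0..r. a n r * b r k * cos ((real k + 1/2) * t))"

lemma continuous_on_mean_kernel: "continuous_on S (mean_kernel a b n)"
  unfolding mean_kernel_def conj_dirichlet_def by (auto intro!: continuous_intros)

lemma continuous_on_cos_mean: "continuous_on S (cos_mean a b n)"
  unfolding cos_mean_def by (auto intro!: continuous_intros)

lemma conj_partial_sum_rep:
  assumes L: "L1 f"
  shows "conj_partial_sum f k x = - (1 / pi) * integral {0..pi} (\<lambda>t. psi f x t * conj_dirichlet k t)"
proof -
  have int: "(\<lambda>t. psi f x t * sin (real \<nu> * t)) integrable_on {0..pi}" for \<nu>
    by (rule psi_mult_continuous_integrable_on[OF L]) (auto intro!: continuous_intros)
  have "conj_partial_sum f k x = - (1 / pi) * (\<Sum>\<nu>\<in>{1..k}. integral {0..pi} (\<lambda>t. psi f x t * sin (real \<nu> * t)))"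
    unfolding conj_partial_sum_def conj_coefficient_rep[OF L] by (simp add: sum_distrib_left)
  also have "(\<Sum>\<nu>\<in>{1..k}. integral {0..pi} (\<lambda>t. psi f x t * sin (real \<nu> * t)))
     = integral {0..pi} (\<lambda>t. psi f x t * conj_dirichlet k t)"
    unfolding conj_dirichlet_def sum_distrib_left by (rule integral_sum[symmetric]) (use int in auto)
  finally show ?thesis .
qed

lemma T_AB_rep:
  assumes L: "L1 f"
  shows "T_AB a b f n x = - (1 / pi) * integral {0..pi} (\<lambda>t. psi f x t * mean_kernel a b n t)"
proof -
  have int: "(\<lambda>t. psi f x t * conj_dirichlet k t) integrable_on {0..pi}" for k
    by (rule psi_mult_continuous_integrable_on[OF L]) (auto simp: conj_dirichlet_def intro!: continuous_intros)
  have "T_AB a b f n x = - (1 / pi) * (\<Sum>r=0..n. \<Sum>k=0..r. integral {0..pi} (\<lambda>t. a n r * b r k * (psi f x t * conj_dirichlet k t)))"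
    unfolding T_AB_def conj_partial_sum_rep[OF L] integral_mult_right by (simp add: sum_distrib_left algebra_simps)
  also have "(\<Sum>r=0..n. \<Sum>k=0..r. integral {0..pi} (\<lambda>t. a n r * b r k * (psi f x t * conj_dirichlet k t)))
     = integral {0..pi} (\<lambda>t. \<Sum>r=0..n. \<Sum>k=0..r. a n r * b r k * (psi f x t * conj_dirichlet k t))"
    using int by (simp add: integral_sum integrable_sum integrable_on_mult_right)
  also have "\<dots> = integral {0..pi} (\<lambda>t. psi f x t * mean_kernel a b n t)"
    unfolding mean_kernel_def by (simp add: sum_distrib_left algebra_simps)
  finally show ?thesis .
qed

lemma continuous_on_half_cot:
  assumes "0 < e"
  shows "continuous_on {e..pi} (\<lambda>t. (1/2) * cot (t/2))"
proof -
  have "sin (t/2) \<noteq> 0" if "t \<in> {e..pi}" for t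
    using that assms by (intro order.strict_implies_not_eq[symmetric] sin_gt_zero) auto
  then show ?thesis unfolding cot_def by (auto intro!: continuous_intros)
qed

lemma conj_trunc_rep:
  assumes L: "L1 f" and e: "0 < e"
  shows "(\<lambda>t. psi f x t * ((1/2) * cot (t/2))) integrable_on {e..pi}"
    "conj_trunc f x e = - (1 / pi) * integral {e..pi} (\<lambda>t. psi f x t * ((1/2) * cot (t/2)))"
proof -
  have si: "set_integrable lborel {e..pi} (\<lambda>t. psi f x t * ((1/2) * cot (t/2)))"
    by (rule set_integrable_mult_continuous[OF psi_set_integrable[OF L] continuous_on_half_cot[OF e]])
  show "(\<lambda>t. psi f x t * ((1/2) * cot (t/2))) integrable_on {e..pi}" using set_integrable_HK(1)[OF si] .
  show "conj_trunc f x e = - (1 / pi) * integral {e..pi} (\<lambda>t. psi f x t * ((1/2) * cot (t/2)))"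
    unfolding conj_trunc_def using set_integrable_HK(2)[OF si] by (simp add: mult.assoc)
qed

lemma conj_dirichlet_closed_form:
  "2 * sin (t/2) * conj_dirichlet k t = cos (t/2) - cos ((real k + 1/2) * t)"
proof (induction k)
  case 0 then show ?case by (simp add: conj_dirichlet_def)
next
  case (Suc k)
  have e1: "(real k + 1/2) * t = real (Suc k) * t - t/2" 
    and e2: "(real (Suc k) + 1/2) * t = real (Suc k) * t + t/2"
    by (simp_all add: algebra_simps)
  have "2 * sin (t/2) * sin (real (Suc k) * t) = cos ((real k + 1/2) * t) - cos ((real (Suc k) + 1/2) * t)"
    unfolding e1 e2 cos_add cos_diff by (simp add: algebra_simps)
  then show ?case using Suc by (simp add: conj_dirichlet_def algebra_simps)
qed

text \<open>Away from the origin the mean kernel differs from $\tfrac12\cot(t/2)$ by the cosine mean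
  divided by $2\sin(t/2)$; this uses that the rows of $A$ and $B$ sum to one.\<close>
lemma mean_kernel_minus_half_cot:
  assumes "sin (t/2) \<noteq> 0" and A: "admissible_matrix a" and B: "admissible_matrix b"
  shows "mean_kernel a b n t - (1/2) * cot (t/2) = - cos_mean a b n t / (2 * sin (t/2))"
proof -
  have sb: "(\<Sum>k=0..r. b r k) = 1" for r using B unfolding admissible_matrix_def by auto
  have sa: "(\<Sum>r=0..n. a n r) = 1" using A unfolding admissible_matrix_def by auto
  let ?c = "cos (t/2) / (2 * sin (t/2))"
  have D: "conj_dirichlet k t = ?c - cos ((real k + 1/2) * t) / (2 * sin (t/2))" for k
    using conj_dirichlet_closed_form[of t k] assms(1) by (simp add: field_simps)
  have "mean_kernel a b n t = (\<Sum>r=0..n. \<Sum>k=0..r. a n r * b r k * ?c)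
      - (\<Sum>r=0..n. \<Sum>k=0..r. a n r * b r k * cos ((real k + 1/2) * t)) / (2 * sin (t/2))"
    unfolding mean_kernel_def D
    by (simp add: sum_subtractf sum_divide_distrib right_diff_distrib)
  also have "(\<Sum>r=0..n. \<Sum>k=0..r. a n r * b r k * ?c) = (\<Sum>r=0..n. a n r * (\<Sum>k=0..r. b r k)) * ?c"
    by (simp add: sum_distrib_left sum_distrib_right mult.assoc sum_divide_distrib)
  also have "\<dots> = ?c" by (simp add: sb sa)
  finally show ?thesis unfolding cos_mean_def cot_def by (simp add: field_simps)
qed

text \<open>Near the origin the conjugate Dirichlet kernel of order $k$ is $O(k^2 t)$, so the mean
  kernel is $O(n)$ on $[0,\pi/(n+1)]$.\<close>
lemma conj_dirichlet_small:
  assumes "0 \<le> t"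
  shows "\<bar>conj_dirichlet k t\<bar> \<le> real k * (real k * t)"
proof -
  have "\<bar>conj_dirichlet k t\<bar> \<le> (\<Sum>\<nu>\<in>{1..k}. \<bar>sin (real \<nu> * t)\<bar>)"
    unfolding conj_dirichlet_def by (rule sum_abs)
  also have "\<dots> \<le> (\<Sum>\<nu>\<in>{1..k}. real k * t)"
  proof (rule sum_mono)
    fix \<nu> assume "\<nu> \<in> {1..k}"
    then have "real \<nu> * t \<le> real k * t" using assms by (intro mult_right_mono) auto
    then show "\<bar>sin (real \<nu> * t)\<bar> \<le> real k * t" using assms abs_sin_x_le_abs_x[of "real \<nu> * t"] by simp
  qed
  finally show ?thesis by simp
qed

lemma mean_kernel_small:
  assumes A: "admissible_matrix a" and B: "admissible_matrix b" and t: "0 \<le> t" "t \<le> pi / (real n + 1)"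
  shows "\<bar>mean_kernel a b n t\<bar> \<le> real n * pi"
proof -
  have an: "0 \<le> a n r" if "r \<le> n" for r using A that unfolding admissible_matrix_def by auto
  have bn: "0 \<le> b r j" if "j \<le> r" for r j using B that unfolding admissible_matrix_def by auto
  have sb: "(\<Sum>j=0..r. b r j) = 1" for r using B unfolding admissible_matrix_def by auto
  have sa: "(\<Sum>r=0..n. a n r) = 1" using A unfolding admissible_matrix_def by auto
  have D: "\<bar>conj_dirichlet k t\<bar> \<le> real n * pi" if "k \<le> n" for k
  proof -
    have "\<bar>conj_dirichlet k t\<bar> \<le> real n * (real n * (pi / (real n + 1)))"
      using conj_dirichlet_small[OF t(1), of k] that t
      by (meson mult_mono of_nat_0_le_iff of_nat_mono order_trans mult_nonneg_nonneg)
    also have "\<dots> \<le> real n * pi"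
      using pi_gt_zero by (intro mult_left_mono) (simp_all add: field_simps)
    finally show ?thesis .
  qed
  have "\<bar>mean_kernel a b n t\<bar> \<le> (\<Sum>r=0..n. \<Sum>k=0..r. a n r * b r k * (real n * pi))"
    unfolding mean_kernel_def
  proof (rule order_trans[OF sum_abs], rule sum_mono, rule order_trans[OF sum_abs], rule sum_mono)
    fix r k assume r: "r \<in> {0..n}" and k: "k \<in> {0..r}"
    have ab: "0 \<le> a n r * b r k" using an[of r] bn[of k r] r k by auto
    have "\<bar>a n r * b r k * conj_dirichlet k t\<bar> = (a n r * b r k) * \<bar>conj_dirichlet k t\<bar>"
      using abs_mult[of "a n r * b r k"] abs_of_nonneg[OF ab] by simp
    then show "\<bar>a n r * b r k * conj_dirichlet k t\<bar> \<le> a n r * b r k * (real n * pi)"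
      using D[of k] r k ab by (simp add: mult_left_mono)
  qed
  also have "\<dots> = (\<Sum>r=0..n. a n r * (\<Sum>k=0..r. b r k)) * (real n * pi)"
    by (simp add: sum_distrib_left sum_distrib_right mult.assoc)
  finally show ?thesis by (simp add: sb sa)
qed

section \<open>Estimates for the cosine mean\<close>

text \<open>Partial sums of $\cos((q+c)t)$ telescope after multiplication by $2\sin(t/2)$,
  hence they are bounded by $1/\sin(t/2)$.\<close>
lemma cos_sum_telescope:
  "2 * sin (t/2) * (\<Sum>q\<in>{p..p+m}. cos ((real q + c) * t))
     = sin ((real (p+m) + c + 1/2) * t) - sin ((real p + c - 1/2) * t)"
proof (induction m)
  case 0
  have "(real p + c + 1/2) * t = (real p + c) * t + t/2" "(real p + c - 1/2) * t = (real p + c) * t - t/2"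
    by (simp_all add: algebra_simps)
  then show ?case by (simp add: sin_add sin_diff)
next
  case (Suc m)
  have "(real (p + Suc m) + c + 1/2) * t = (real (p + Suc m) + c) * t + t/2"
    "(real (p+m) + c + 1/2) * t = (real (p + Suc m) + c) * t - t/2"
    by (simp_all add: algebra_simps)
  then have "2 * sin (t/2) * cos ((real (p + Suc m) + c) * t)
     = sin ((real (p + Suc m) + c + 1/2) * t) - sin ((real (p+m) + c + 1/2) * t)"
    by (simp add: sin_add sin_diff)
  then show ?case using Suc by (simp add: algebra_simps)
qed

lemma cos_sum_bound:
  assumes s: "sin (t/2) > 0"
  shows "\<bar>\<Sum>q\<in>{p..r}. cos ((real q + c) * t)\<bar> \<le> 1 / sin (t/2)"
proof (cases "p \<le> r")
  case True
  then have "r = p + (r - p)" by simp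
  then have "2 * sin (t/2) * (\<Sum>q\<in>{p..r}. cos ((real q + c) * t))
      = sin ((real r + c + 1/2) * t) - sin ((real p + c - 1/2) * t)"
    using cos_sum_telescope[where t=t and p=p and m="r - p" and c=c] by metis
  moreover have "\<bar>sin ((real r + c + 1/2) * t) - sin ((real p + c - 1/2) * t)\<bar> \<le> 2"
    using abs_sin_le_one[of "(real r + c + 1/2) * t"] abs_sin_le_one[of "(real p + c - 1/2) * t"] by linarith
  ultimately have "2 * sin (t/2) * \<bar>\<Sum>q\<in>{p..r}. cos ((real q + c) * t)\<bar> \<le> 2"
    using s by (simp add: abs_mult)
  then show ?thesis using s by (simp add: field_simps)
next
  case False
  then show ?thesis using s by simp
qed

lemma abel_summation:
  fixes c \<phi> :: "nat \<Rightarrow> real"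
  shows "(\<Sum>r\<in>{p..p+m}. c r * \<phi> r)
     = (\<Sum>r\<in>{p..<p+m}. (c r - c (Suc r)) * (\<Sum>q\<in>{p..r}. \<phi> q)) + c (p+m) * (\<Sum>q\<in>{p..p+m}. \<phi> q)"
  by (induction m) (simp_all add: algebra_simps)

lemma abel_summation_bound:
  fixes c \<phi> :: "nat \<Rightarrow> real"
  assumes "p \<le> n" and bd: "\<And>r. \<bar>\<Sum>q\<in>{p..r}. \<phi> q\<bar> \<le> B"
  shows "\<bar>\<Sum>r\<in>{p..n}. c r * \<phi> r\<bar> \<le> B * ((\<Sum>r\<in>{p..<n}. \<bar>c r - c (Suc r)\<bar>) + \<bar>c n\<bar>)"
proof -
  have "n = p + (n - p)" using assms by simp
  then have eq: "(\<Sum>r\<in>{p..n}. c r * \<phi> r)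
     = (\<Sum>r\<in>{p..<n}. (c r - c (Suc r)) * (\<Sum>q\<in>{p..r}. \<phi> q)) + c n * (\<Sum>q\<in>{p..n}. \<phi> q)"
    using abel_summation[of c \<phi> p "n - p"] by metis
  have "\<bar>\<Sum>r\<in>{p..<n}. (c r - c (Suc r)) * (\<Sum>q\<in>{p..r}. \<phi> q)\<bar> \<le> (\<Sum>r\<in>{p..<n}. \<bar>c r - c (Suc r)\<bar> * B)"
    by (rule order_trans[OF sum_abs]) (auto simp: abs_mult intro!: sum_mono mult_left_mono bd)
  moreover have "\<bar>c n * (\<Sum>q\<in>{p..n}. \<phi> q)\<bar> \<le> \<bar>c n\<bar> * B"
    by (auto simp: abs_mult intro!: mult_left_mono bd)
  ultimately show ?thesis unfolding eq
    by (simp add: sum_distrib_left sum_distrib_right algebra_simps)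
qed

lemma sum_triangle_swap:
  fixes h :: "nat \<Rightarrow> nat \<Rightarrow> real"
  assumes "m \<le> n"
  shows "(\<Sum>l\<in>{0..n}. \<Sum>r\<in>{max k l..m}. h l r) = (\<Sum>r\<in>{k..m}. \<Sum>l\<in>{0..r}. h l r)"
proof -
  have "(\<Sum>r\<in>{k..m}. \<Sum>l\<in>{l. l \<in> {0..n} \<and> l \<le> r}. h l r)
      = (\<Sum>l\<in>{0..n}. \<Sum>r\<in>{r. r \<in> {k..m} \<and> l \<le> r}. h l r)"
    by (rule sum.swap_restrict) auto
  moreover have "\<And>r. r \<in> {k..m} \<Longrightarrow> {l. l \<in> {0..n} \<and> l \<le> r} = {0..r}" using assms by auto
  moreover have "\<And>l. {r. r \<in> {k..m} \<and> l \<le> r} = {max k l..m}" by auto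
  ultimately show ?thesis by simp
qed

text \<open>Summing the weights $1/(r+1)^2$ of hypothesis (iii) over the $r+1$ diagonals through row $r$.\<close>
lemma sum_diagonal_weights:
  fixes h :: "nat \<Rightarrow> real"
  assumes "1 \<le> n"
  shows "(\<Sum>l\<in>{0..n}. \<Sum>r\<in>{max k l..<n}. h r / (real r + 1)^2) = (\<Sum>r\<in>{k..<n}. h r / (real r + 1))"
proof -
  obtain m where m: "n = Suc m" using assms by (cases n) auto
  have "(\<Sum>l\<in>{0..n}. \<Sum>r\<in>{max k l..<n}. h r / (real r + 1)^2)
      = (\<Sum>r\<in>{k..m}. \<Sum>l\<in>{0..r}. h r / (real r + 1)^2)"
    unfolding m atLeastLessThanSuc_atLeastAtMost by (rule sum_triangle_swap) simp
  also have "\<dots> = (\<Sum>r\<in>{k..m}. h r / (real r + 1))"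
  proof (rule sum.cong[OF refl])
    fix r
    have "real r + 1 \<noteq> 0" by simp
    have "(\<Sum>l\<in>{0..r}. h r / (real r + 1)^2) = (real r + 1) * (h r / (real r + 1)^2)" by simp
    also have "\<dots> = h r / (real r + 1)"
      using \<open>real r + 1 \<noteq> 0\<close> by (simp add: power2_eq_square)
    finally show "(\<Sum>l\<in>{0..r}. h r / (real r + 1)^2) = h r / (real r + 1)" .
  qed
  finally show ?thesis unfolding m atLeastLessThanSuc_atLeastAtMost .
qed

text \<open>Along the $l$-th diagonal $k = r - l$ of $B$ the products $a_{n,r}b_{r,r-l}$ vary slowly by
  hypothesis (iii), so Abel summation against the bounded cosine sums gives a small contribution.\<close>
lemma cos_mean_diagonal_bound:
  assumes A: "admissible_matrix a" and B: "admissible_matrix b"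
   and iii: "\<forall>n r l. l \<le> r \<and> r + 1 \<le> n \<longrightarrow>
            \<bar>a n r * b r (r - l) - a n (r + 1) * b (r + 1) (r + 1 - l)\<bar>
              \<le> K3 * a n r / (real r + 1)^2"
   and s: "sin (t/2) > 0" and l: "l \<le> n" and k: "k \<le> n"
  shows "\<bar>\<Sum>r\<in>{max k l..n}. a n r * b r (r - l) * cos ((real (r - l) + 1/2) * t)\<bar>
     \<le> (1 / sin (t/2)) * ((\<Sum>r\<in>{max k l..<n}. K3 * a n r / (real r + 1)^2) + a n n * b n (n - l))"
proof -
  define c where "c r = a n r * b r (r - l)" for r
  define \<phi> where "\<phi> r = cos ((real r + (1/2 - real l)) * t)" for r
  have "(\<Sum>r\<in>{max k l..n}. a n r * b r (r - l) * cos ((real (r - l) + 1/2) * t)) = (\<Sum>r\<in>{max k l..n}. c r * \<phi> r)"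
    unfolding c_def \<phi>_def by (rule sum.cong) (auto simp: of_nat_diff algebra_simps)
  also have "\<bar>\<dots>\<bar> \<le> (1 / sin (t/2)) * ((\<Sum>r\<in>{max k l..<n}. \<bar>c r - c (Suc r)\<bar>) + \<bar>c n\<bar>)"
    by (rule abel_summation_bound) (use l k in \<open>auto simp: \<phi>_def intro: cos_sum_bound[OF s]\<close>)
  also have "\<dots> \<le> (1 / sin (t/2)) * ((\<Sum>r\<in>{max k l..<n}. K3 * a n r / (real r + 1)^2) + a n n * b n (n - l))"
  proof (rule mult_left_mono, rule add_mono)
    show "(\<Sum>r\<in>{max k l..<n}. \<bar>c r - c (Suc r)\<bar>) \<le> (\<Sum>r\<in>{max k l..<n}. K3 * a n r / (real r + 1)^2)"
      using iii unfolding c_def by (intro sum_mono) (auto simp del: of_nat_Suc)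
    show "\<bar>c n\<bar> \<le> a n n * b n (n - l)"
      using A B unfolding c_def admissible_matrix_def by simp
  qed (use s in simp)
  finally show ?thesis .
qed

text \<open>The rows $r \ge k$ of the cosine mean, regrouped along diagonals.\<close>
lemma cos_mean_tail_bound:
  assumes A: "admissible_matrix a" and B: "admissible_matrix b"
   and iii: "\<forall>n r l. l \<le> r \<and> r + 1 \<le> n \<longrightarrow>
            \<bar>a n r * b r (r - l) - a n (r + 1) * b (r + 1) (r + 1 - l)\<bar>
              \<le> K3 * a n r / (real r + 1)^2"
   and s: "sin (t/2) > 0" and k: "1 \<le> k" "k \<le> n"
  shows "\<bar>\<Sum>r\<in>{k..n}. \<Sum>j\<in>{0..r}. a n r * b r j * cos ((real j + 1/2) * t)\<bar>
     \<le> (1 / sin (t/2)) * (K3 * (\<Sum>r\<in>{k..<n}. a n r / (real r + 1)) + a n n)"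
proof -
  define G where "G r j = a n r * b r j * cos ((real j + 1/2) * t)" for r j
  define diag where "diag l = (\<Sum>r\<in>{max k l..n}. G r (r - l))" for l
  have "(\<Sum>r\<in>{k..n}. \<Sum>j\<in>{0..r}. G r j) = (\<Sum>r\<in>{k..n}. \<Sum>l\<in>{0..r}. G r (r - l))"
  proof (rule sum.cong[OF refl])
    fix r show "(\<Sum>j\<in>{0..r}. G r j) = (\<Sum>l\<in>{0..r}. G r (r - l))"
      using sum.atLeastAtMost_rev[of "G r" 0 r] by simp
  qed
  also have "\<dots> = (\<Sum>l\<in>{0..n}. diag l)"
    unfolding diag_def by (rule sum_triangle_swap[symmetric]) simp
  finally have regroup: "(\<Sum>r\<in>{k..n}. \<Sum>j\<in>{0..r}. G r j) = (\<Sum>l\<in>{0..n}. diag l)" .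
  have "\<bar>\<Sum>l\<in>{0..n}. diag l\<bar>
      \<le> (\<Sum>l\<in>{0..n}. (1 / sin (t/2)) * ((\<Sum>r\<in>{max k l..<n}. K3 * a n r / (real r + 1)^2) + a n n * b n (n - l)))"
    unfolding diag_def G_def
    by (rule order_trans[OF sum_abs], rule sum_mono) (use cos_mean_diagonal_bound[OF A B iii s _ k(2)] in auto)
  also have "\<dots> = (1 / sin (t/2)) * ((\<Sum>l\<in>{0..n}. \<Sum>r\<in>{max k l..<n}. K3 * a n r / (real r + 1)^2)
      + a n n * (\<Sum>l\<in>{0..n}. b n (n - l)))"
    by (simp only: sum_distrib_left[symmetric] sum.distrib)
  also have "(\<Sum>l\<in>{0..n}. b n (n - l)) = 1"
    using sum.atLeastAtMost_rev[of "b n" 0 n] B unfolding admissible_matrix_def by simp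
  also have "(\<Sum>l\<in>{0..n}. \<Sum>r\<in>{max k l..<n}. K3 * a n r / (real r + 1)^2) = K3 * (\<Sum>r\<in>{k..<n}. a n r / (real r + 1))"
    using sum_diagonal_weights[of n "\<lambda>r. K3 * a n r" k] k by (simp add: sum_distrib_left)
  finally show ?thesis using regroup unfolding G_def by simp
qed

text \<open>Jordan's inequality $\sin y \ge y/\pi$ on $[0,\pi/2]$ (we only need this weak constant),
  and the bound $0 \le \tfrac12\cot(t/2) \le 1/t$ on $(0,\pi]$.\<close>
lemma sin_ge_mult_cos:
  assumes "0 \<le> y" "y \<le> pi/2"
  shows "y * cos y \<le> sin y"
proof (cases "y = 0")
  case True then show ?thesis by simp
next
  case False
  then have "0 < y" using assms by simp
  from MVT2[OF this DERIV_sin]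
  obtain z where z: "0 < z" "z < y" "sin y - sin 0 = (y - 0) * cos z" by auto
  have "cos y \<le> cos z" by (rule cos_monotone_0_pi_le) (use z assms pi_gt3 in auto)
  then have "y * cos y \<le> y * cos z" using \<open>0 < y\<close> by (simp add: mult_left_mono)
  then show ?thesis using z by simp
qed

lemma sin_ge_linear:
  assumes "0 \<le> y" "y \<le> pi/2"
  shows "y / pi \<le> sin y"
proof (cases "y \<le> pi/3")
  case True
  have "cos (pi/3) \<le> cos y" by (rule cos_monotone_0_pi_le) (use True assms in auto)
  then have "1/2 \<le> cos y" by (simp add: cos_60)
  then have "y * (1/2) \<le> y * cos y" using mult_left_mono[OF \<open>1/2 \<le> cos y\<close>, of y] assms by simp
  moreover have "y / pi \<le> y / 2" by (rule divide_left_mono) (use assms pi_gt3 in auto)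
  ultimately show ?thesis using sin_ge_mult_cos[OF assms] by linarith
next
  case False
  have "sin (pi/3) \<le> sin y" by (rule sin_monotone_2pi_le) (use False assms in auto)
  then have "sqrt 3 / 2 \<le> sin y" by (simp add: sin_60)
  moreover have "1 \<le> sqrt 3" by simp
  moreover have "y / pi \<le> 1/2" using assms pi_gt3 by (simp add: field_simps)
  ultimately show ?thesis by linarith
qed

lemma half_cot_bounds:
  assumes "0 < t" "t \<le> pi"
  shows "0 \<le> (1/2) * cot (t/2)" "(1/2) * cot (t/2) \<le> 1 / t"
proof -
  have s: "0 < sin (t/2)" using assms by (intro sin_gt_zero) auto
  have c: "0 \<le> cos (t/2)" using assms by (intro cos_ge_zero) auto
  show "0 \<le> (1/2) * cot (t/2)" using s c by (simp add: cot_def)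
  have "(t/2) * cos (t/2) \<le> sin (t/2)" using sin_ge_mult_cos[of "t/2"] assms by simp
  then show "(1/2) * cot (t/2) \<le> 1 / t" using s assms by (simp add: cot_def field_simps)
qed

lemma sin_half_on_piece:
  assumes k: "1 \<le> k" and t: "pi / (real k + 1) \<le> t" "t \<le> pi / real k"
  shows "0 < sin (t/2)" "1 / sin (t/2) \<le> 2 * (real k + 1)"
proof -
  have t0: "0 < t" using t(1) by (smt (verit) divide_pos_pos of_nat_0_le_iff pi_gt_zero)
  have "pi / real k \<le> pi" using k pi_gt_zero by (simp add: divide_le_eq)
  then have tpi: "t \<le> pi" using t(2) by linarith
  show s: "0 < sin (t/2)" using t0 tpi by (intro sin_gt_zero) auto
  have "1 / (2 * (real k + 1)) \<le> t / (2*pi)" using t(1) pi_gt_zero by (simp add: field_simps)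
  also have "\<dots> \<le> sin (t/2)" using sin_ge_linear[of "t/2"] t0 tpi by simp
  finally show "1 / sin (t/2) \<le> 2 * (real k + 1)" using s by (simp add: field_simps)
qed

text \<open>The weight multiplying the mass of $|\psi_x|$ on $[\pi/(k+1),\pi/k]$ in the main estimate.
  It depends only on the row $a = (a_{n,r})_r$ of $A$.\<close>
definition kernel_weight :: "(nat \<Rightarrow> real) \<Rightarrow> real \<Rightarrow> nat \<Rightarrow> nat \<Rightarrow> real" where
  "kernel_weight a K n k = (real k + 1) * (\<Sum>r\<in>{0..<k}. a r)
     + 2 * (real k + 1)^2 * (K * (\<Sum>r\<in>{k..<n}. a r / (real r + 1)) + a n)"

text \<open>On $[\pi/(k+1),\pi/k]$ the rows $r<k$ of the cosine mean are bounded trivially and the rows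
  $r \ge k$ by the diagonal estimate; since $\sin(t/2) \ge 1/(2(k+1))$ there, this bounds the
  difference kernel $|H_n(t)|/(2\sin(t/2))$ by the kernel weight.\<close>
lemma cos_mean_bound:
  assumes A: "admissible_matrix a" and B: "admissible_matrix b"
   and iii: "\<forall>n r l. l \<le> r \<and> r + 1 \<le> n \<longrightarrow>
            \<bar>a n r * b r (r - l) - a n (r + 1) * b (r + 1) (r + 1 - l)\<bar>
              \<le> K3 * a n r / (real r + 1)^2"
   and K3: "K3 > 0"
   and k: "1 \<le> k" "k \<le> n" and t: "pi / (real k + 1) \<le> t" "t \<le> pi / real k"
  shows "\<bar>cos_mean a b n t\<bar> / (2 * sin (t/2)) \<le> kernel_weight (a n) K3 n k"
proof -
  have an: "0 \<le> a n r" if "r \<le> n" for r using A that unfolding admissible_matrix_def by auto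
  have bn: "0 \<le> b r j" if "j \<le> r" for r j using B that unfolding admissible_matrix_def by auto
  have sb: "(\<Sum>j=0..r. b r j) = 1" for r using B unfolding admissible_matrix_def by auto
  note s = sin_half_on_piece(1)[OF k(1) t] 
  obtain u where u_def: "u = 1 / sin (t/2)" and u: "0 < u" "u \<le> 2 * (real k + 1)"
    using s sin_half_on_piece(2)[OF k(1) t] by simp
  define G where "G r j = a n r * b r j * cos ((real j + 1/2) * t)" for r j
  define head where "head = (\<Sum>r\<in>{0..<k}. a n r)"
  define tail where "tail = K3 * (\<Sum>r\<in>{k..<n}. a n r / (real r + 1)) + a n n"
  have head0: "0 \<le> head" unfolding head_def using an k by (auto intro!: sum_nonneg)
  have tail0: "0 \<le> tail" unfolding tail_def using K3 an
    by (auto intro!: sum_nonneg add_nonneg_nonneg mult_nonneg_nonneg)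
  have rows: "{0..n} = {0..<k} \<union> {k..n}" using k by auto
  have split: "cos_mean a b n t = (\<Sum>r\<in>{0..<k}. \<Sum>j\<in>{0..r}. G r j) + (\<Sum>r\<in>{k..n}. \<Sum>j\<in>{0..r}. G r j)"
    unfolding cos_mean_def G_def rows by (rule sum.union_disjoint) auto
  have "\<bar>\<Sum>r\<in>{0..<k}. \<Sum>j\<in>{0..r}. G r j\<bar> \<le> (\<Sum>r\<in>{0..<k}. \<Sum>j\<in>{0..r}. a n r * b r j)"
    unfolding G_def using an bn k
    by (intro order_trans[OF sum_abs] sum_mono order_trans[OF sum_abs])
      (auto simp: abs_mult intro!: mult_left_le mult_nonneg_nonneg)
  also have "\<dots> = head" unfolding head_def by (simp add: sum_distrib_left[symmetric] sb)
  finally have "\<bar>cos_mean a b n t\<bar> \<le> head + u * tail"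
    using split cos_mean_tail_bound[OF A B iii s k] unfolding G_def u_def tail_def by linarith
  then have "\<bar>cos_mean a b n t\<bar> / (2 * sin (t/2)) \<le> head * u / 2 + tail * (u * u) / 2"
    using s by (simp add: u_def divide_right_mono field_simps)
  also have "\<dots> \<le> head * (real k + 1) + tail * (2 * (real k + 1)^2)"
  proof (rule add_mono)
    show "head * u / 2 \<le> head * (real k + 1)" using mult_left_mono[OF u(2) head0] by (simp add: algebra_simps)
    have "u * u \<le> (2 * (real k + 1)) * (2 * (real k + 1))" using u by (intro mult_mono) auto
    then show "tail * (u * u) / 2 \<le> tail * (2 * (real k + 1)^2)"
      using tail0 mult_left_mono[of "u*u" "(2 * (real k + 1)) * (2 * (real k + 1))" tail]
      by (simp add: power2_eq_square algebra_simps)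
  qed
  finally show ?thesis unfolding kernel_weight_def head_def tail_def by (simp add: algebra_simps)
qed

section \<open>Discrete estimates\<close>

text \<open>Throughout, \<open>a\<close> is a row of $A$, \<open>W k\<close> stands for $\bar w_x f(\pi/k)$ (nonnegative and
  nonincreasing for $k \ge 1$) and \<open>F k\<close> for $\int_0^{\pi/k}|\psi_x|$, so that $F(k) \le (\pi/k)W(k)$.
  The quantity to be bounded by is the real version of the right-hand side of the theorem.\<close>
definition rhs_real :: "(nat \<Rightarrow> real) \<Rightarrow> (nat \<Rightarrow> real) \<Rightarrow> nat \<Rightarrow> real" where
  "rhs_real a W n = (\<Sum>r=0..n. a r * (1 / (real r + 1) * (\<Sum>j=0..r. W (j+1))))"

lemma summation_by_parts:
  fixes w F :: "nat \<Rightarrow> real"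
  shows "(\<Sum>k\<in>{1..m}. w k * (F k - F (Suc k)))
     = (\<Sum>k\<in>{1..m}. (w k - w (k - 1)) * F k) + w 0 * F 1 - w m * F (Suc m)"
  by (induction m) (simp_all add: algebra_simps)

lemma antitone_from_one:
  fixes W :: "nat \<Rightarrow> real"
  assumes dec: "\<And>k. 1 \<le> k \<Longrightarrow> W (Suc k) \<le> W k" and "1 \<le> j" "j \<le> k"
  shows "W k \<le> W j"
  using assms(3)
proof (induction k rule: dec_induct)
  case (step m)
  have "W (Suc m) \<le> W m" using step.hyps(1) assms(2) by (intro dec) simp
  then show ?case using step.IH by linarith
qed simp

lemma antitone_le_average:
  fixes W :: "nat \<Rightarrow> real"
  assumes dec: "\<And>k. 1 \<le> k \<Longrightarrow> W (Suc k) \<le> W k"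
  shows "(real r + 1) * W (r + 1) \<le> (\<Sum>j=0..r. W (j+1))"
proof -
  have "(\<Sum>j=0..r. W (r+1)) \<le> (\<Sum>j=0..r. W (j+1))"
    by (intro sum_mono antitone_from_one[where W=W, OF dec]) auto
  then show ?thesis by (simp add: add.commute)
qed

lemma average_antitone:
  fixes W :: "nat \<Rightarrow> real"
  assumes dec: "\<And>k. 1 \<le> k \<Longrightarrow> W (Suc k) \<le> W k" and "r \<le> m"
  shows "(1 / (real m + 1)) * (\<Sum>j=0..m. W (j+1)) \<le> (1 / (real r + 1)) * (\<Sum>j=0..r. W (j+1))"
  using assms(2)
proof (induction m rule: dec_induct)
  case base then show ?case by simp
next
  case (step m)
  define S where "S = (\<Sum>j=0..m. W (j+1))"
  have "(real m + 1) * W (m + 2) \<le> (real m + 1) * W (m+1)"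
    using dec[of "m+1"] by (intro mult_left_mono) auto
  then have key: "(real m + 1) * W (m + 2) \<le> S"
    using antitone_le_average[where W=W, OF dec, of m] unfolding S_def by linarith
  have "(1 / (real (Suc m) + 1)) * (\<Sum>j=0..Suc m. W (j+1)) = (S + W (m+2)) / (real m + 2)"
    unfolding S_def by simp
  also have "\<dots> \<le> S / (real m + 1)" using key by (simp add: field_simps)
  finally show ?case using step unfolding S_def by simp
qed

lemma rhs_real_lower_bounds:
  fixes a W :: "nat \<Rightarrow> real"
  assumes a0: "\<And>r. r \<le> n \<Longrightarrow> 0 \<le> a r" and a1: "(\<Sum>r=0..n. a r) = 1"
    and dec: "\<And>k. 1 \<le> k \<Longrightarrow> W (Suc k) \<le> W k"
  shows "(\<Sum>r=0..n. a r * W (r+1)) \<le> rhs_real a W n"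
    and "(1 / (real n + 1)) * (\<Sum>j=0..n. W (j+1)) \<le> rhs_real a W n"
    and "W (n+1) \<le> rhs_real a W n"
proof -
  have avg: "W (r+1) \<le> 1 / (real r + 1) * (\<Sum>j=0..r. W (j+1))" for r
    using antitone_le_average[where W=W, OF dec, of r] by (simp add: field_simps)
  show weighted: "(\<Sum>r=0..n. a r * W (r+1)) \<le> rhs_real a W n"
    unfolding rhs_real_def by (intro sum_mono mult_left_mono avg) (use a0 in auto)
  have "(1 / (real n + 1)) * (\<Sum>j=0..n. W (j+1)) = (\<Sum>r=0..n. a r * ((1 / (real n + 1)) * (\<Sum>j=0..n. W (j+1))))"
    by (subst sum_distrib_right[symmetric]) (simp add: a1)
  also have "\<dots> \<le> rhs_real a W n" unfolding rhs_real_def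
    by (intro sum_mono mult_left_mono average_antitone[where W=W, OF dec]) (use a0 in auto)
  finally show "(1 / (real n + 1)) * (\<Sum>j=0..n. W (j+1)) \<le> rhs_real a W n" .
  have "W (n+1) = (\<Sum>r=0..n. a r * W (n+1))" by (simp add: sum_distrib_right[symmetric] a1)
  also have "\<dots> \<le> (\<Sum>r=0..n. a r * W (r+1))"
    by (intro sum_mono mult_left_mono antitone_from_one[where W=W, OF dec]) (use a0 in auto)
  finally show "W (n+1) \<le> rhs_real a W n" using weighted by linarith
qed

text \<open>Summation by parts turns $\sum_k (k+1)^2 (F(k)-F(k+1))$ into $\sum_k (2k+1)F(k)$, which is
  at most $4\pi\sum_{j\le m} W(j+1)$.\<close>
lemma weighted_increments_bound:
  fixes F W :: "nat \<Rightarrow> real"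
  assumes F0: "\<And>k. 1 \<le> k \<Longrightarrow> k \<le> m + 1 \<Longrightarrow> 0 \<le> F k"
    and FW: "\<And>k. 1 \<le> k \<Longrightarrow> k \<le> m + 1 \<Longrightarrow> F k \<le> pi / real k * W k"
    and W0: "\<And>k. 0 \<le> W k"
  shows "(\<Sum>k\<in>{1..m}. (real k + 1)^2 * (F k - F (Suc k))) \<le> 4 * pi * (\<Sum>j=0..m. W (j+1))"
proof -
  have step: "((real k + 1)^2 - (real (k - 1) + 1)^2) * F k \<le> 3 * pi * W k" if k: "k \<in> {1..m}" for k
  proof -
    have e: "real (k - 1) + 1 = real k" using k by (simp add: of_nat_diff)
    have "((real k + 1)^2 - (real (k - 1) + 1)^2) * F k \<le> (3 * real k) * F k"
      using F0[of k] k unfolding e by (intro mult_right_mono) (auto simp: power2_eq_square algebra_simps)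
    also have "\<dots> \<le> (3 * real k) * (pi / real k * W k)"
      using FW[of k] k by (intro mult_left_mono) auto
    finally show ?thesis using k by simp
  qed
  have "(\<Sum>k\<in>{1..m}. (real k + 1)^2 * (F k - F (Suc k)))
      = (\<Sum>k\<in>{1..m}. ((real k + 1)^2 - (real (k - 1) + 1)^2) * F k) + F 1 - (real m + 1)^2 * F (Suc m)"
    using summation_by_parts[of "\<lambda>k. (real k + 1)^2" F m] by simp
  also have "\<dots> \<le> 3 * pi * (\<Sum>k\<in>{1..m}. W k) + pi * W 1"
  proof -
    have "(\<Sum>k\<in>{1..m}. ((real k + 1)^2 - (real (k - 1) + 1)^2) * F k) \<le> (\<Sum>k\<in>{1..m}. 3 * pi * W k)"
      by (rule sum_mono) (rule step)
    moreover have "(\<Sum>k\<in>{1..m}. 3 * pi * W k) = 3 * pi * (\<Sum>k\<in>{1..m}. W k)"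
      by (simp add: sum_distrib_left)
    moreover have "F 1 \<le> pi * W 1" using FW[of 1] by simp
    moreover have "0 \<le> (real m + 1)^2 * F (Suc m)" using F0[of "Suc m"] by simp
    ultimately show ?thesis by linarith
  qed
  also have "\<dots> \<le> 3 * pi * (\<Sum>k\<in>{1..Suc m}. W k) + pi * (\<Sum>k\<in>{1..Suc m}. W k)"
    using W0 member_le_sum[of 1 "{1..Suc m}" W]
    by (intro add_mono mult_left_mono sum_mono2) auto
  also have "\<dots> = 4 * pi * (\<Sum>j=0..m. W (j+1))"
    using sum.shift_bounds_cl_Suc_ivl[of W 0 m] by (simp add: algebra_simps)
  finally show ?thesis .
qed

text \<open>The head part of the kernel weight, $(k+1)\sum_{r<k}a_r$, is handled by hypothesis (ii):
  its increments are at most $(K_2+1)k\,a_{k-1}$.\<close>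
lemma head_increment_bound:
  fixes a F W :: "nat \<Rightarrow> real"
  assumes a0: "\<And>r. r \<le> n \<Longrightarrow> 0 \<le> a r"
    and ii: "\<And>s. s \<le> n \<Longrightarrow> (1 / (real s + 1)) * (\<Sum>r=0..s. a r) \<le> K2 * a s"
    and FW: "F k \<le> pi / real k * W k" and W0: "0 \<le> W k" and k: "k \<in> {1..n}"
  defines "A \<equiv> \<lambda>k. \<Sum>r\<in>{0..<k}. a r"
  shows "((real k + 1) * A k - (real (k - 1) + 1) * A (k - 1)) * F k \<le> pi * (K2 + 1) * (a (k - 1) * W k)"
proof -
  obtain j where j: "k = Suc j" using k by (cases k) auto
  have aj: "0 \<le> a j" using a0 k j by simp
  have Ak: "0 \<le> A k" unfolding A_def using a0 k by (auto intro!: sum_nonneg)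
  have e: "(real k + 1) * A k - (real (k - 1) + 1) * A (k - 1) = A k + real k * a j"
    unfolding A_def j by (simp add: algebra_simps)
  have ii_j: "A k / real k \<le> K2 * a j"
    using ii[of j] k unfolding A_def j by (simp add: atLeastLessThanSuc_atLeastAtMost add.commute)
  have "(A k + real k * a j) * F k \<le> (A k + real k * a j) * (pi / real k * W k)"
    using FW Ak aj by (intro mult_left_mono) auto
  also have "\<dots> = pi * (A k / real k + a j) * W k" using k by (simp add: field_simps)
  also have "\<dots> \<le> pi * (K2 * a j + a j) * W k"
    using ii_j W0 by (intro mult_right_mono mult_left_mono) auto
  finally have "(A k + real k * a j) * F k \<le> pi * (K2 * a j + a j) * W k" .
  moreover have "pi * (K2 * a j + a j) * W k = pi * (K2 + 1) * (a (k - 1) * W k)"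
    using j by (simp add: algebra_simps)
  ultimately show ?thesis unfolding e by simp
qed

lemma head_part_bound:
  fixes a F W :: "nat \<Rightarrow> real"
  assumes a0: "\<And>r. r \<le> n \<Longrightarrow> 0 \<le> a r"
    and ii: "\<And>s. s \<le> n \<Longrightarrow> (1 / (real s + 1)) * (\<Sum>r=0..s. a r) \<le> K2 * a s"
    and F0: "\<And>k. 1 \<le> k \<Longrightarrow> k \<le> n + 1 \<Longrightarrow> 0 \<le> F k"
    and FW: "\<And>k. 1 \<le> k \<Longrightarrow> k \<le> n + 1 \<Longrightarrow> F k \<le> pi / real k * W k"
    and W0: "\<And>k. 0 \<le> W k" and K2: "0 \<le> K2"
  shows "(\<Sum>k\<in>{1..n}. ((real k + 1) * (\<Sum>r\<in>{0..<k}. a r)) * (F k - F (Suc k)))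
     \<le> pi * (K2 + 1) * (\<Sum>r=0..n. a r * W (r+1))"
proof -
  define A where "A k = (\<Sum>r\<in>{0..<k}. a r)" for k
  have "(\<Sum>k\<in>{1..n}. ((real k + 1) * A k) * (F k - F (Suc k)))
      = (\<Sum>k\<in>{1..n}. ((real k + 1) * A k - (real (k - 1) + 1) * A (k - 1)) * F k)
         - (real n + 1) * A n * F (Suc n)"
    using summation_by_parts[of "\<lambda>k. (real k + 1) * A k" F n] by (simp add: A_def)
  also have "\<dots> \<le> (\<Sum>k\<in>{1..n}. pi * (K2 + 1) * (a (k - 1) * W k))"
  proof -
    have "0 \<le> (real n + 1) * A n * F (Suc n)"
      unfolding A_def using a0 F0[of "Suc n"] by (auto intro!: mult_nonneg_nonneg sum_nonneg)
    moreover have "(\<Sum>k\<in>{1..n}. ((real k + 1) * A k - (real (k - 1) + 1) * A (k - 1)) * F k)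
        \<le> (\<Sum>k\<in>{1..n}. pi * (K2 + 1) * (a (k - 1) * W k))"
      unfolding A_def using FW W0 by (intro sum_mono head_increment_bound[OF a0 ii]) auto
    ultimately show ?thesis by linarith
  qed
  also have "\<dots> \<le> pi * (K2 + 1) * (\<Sum>r=0..n. a r * W (r+1))"
  proof (cases n)
    case (Suc m)
    have "(\<Sum>k\<in>{1..n}. a (k - 1) * W k) = (\<Sum>r\<in>{0..m}. a r * W (r+1))"
      unfolding Suc using sum.shift_bounds_cl_Suc_ivl[of "\<lambda>k. a (k - 1) * W k" 0 m] by simp
    also have "\<dots> \<le> (\<Sum>r=0..n. a r * W (r+1))"
      by (rule sum_mono2) (use a0 W0 Suc in auto)
    finally show ?thesis using K2 by (simp add: sum_distrib_left[symmetric] mult_left_mono)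
  qed (use a0 W0 K2 in simp)
  finally show ?thesis unfolding A_def .
qed

text \<open>The middle part of the kernel weight, which comes from hypothesis (iii), is handled by
  exchanging the summations and applying the weighted increment bound row by row.\<close>
lemma middle_part_bound:
  fixes a F W :: "nat \<Rightarrow> real"
  assumes a0: "\<And>r. r \<le> n \<Longrightarrow> 0 \<le> a r"
    and F0: "\<And>k. 1 \<le> k \<Longrightarrow> k \<le> n + 1 \<Longrightarrow> 0 \<le> F k"
    and FW: "\<And>k. 1 \<le> k \<Longrightarrow> k \<le> n + 1 \<Longrightarrow> F k \<le> pi / real k * W k"
    and W0: "\<And>k. 0 \<le> W k"
  shows "(\<Sum>k\<in>{1..n}. (real k + 1)^2 * (\<Sum>r\<in>{k..<n}. a r / (real r + 1)) * (F k - F (Suc k)))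
     \<le> 4 * pi * rhs_real a W n"
proof -
  define G where "G k = (real k + 1)^2 * (F k - F (Suc k))" for k
  have "(\<Sum>k\<in>{1..n}. (real k + 1)^2 * (\<Sum>r\<in>{k..<n}. a r / (real r + 1)) * (F k - F (Suc k)))
      = (\<Sum>k\<in>{1..n}. \<Sum>r\<in>{r. r \<in> {0..<n} \<and> k \<le> r}. a r / (real r + 1) * G k)"
  proof (rule sum.cong[OF refl])
    fix k
    have rows: "{r. r \<in> {0..<n} \<and> k \<le> r} = {k..<n}" by auto
    have "(real k + 1)^2 * (\<Sum>r\<in>{k..<n}. a r / (real r + 1)) * (F k - F (Suc k))
        = (\<Sum>r\<in>{k..<n}. a r / (real r + 1)) * G k"
      unfolding G_def by (simp only: mult_ac)
    then show "(real k + 1)^2 * (\<Sum>r\<in>{k..<n}. a r / (real r + 1)) * (F k - F (Suc k))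
      = (\<Sum>r\<in>{r. r \<in> {0..<n} \<and> k \<le> r}. a r / (real r + 1) * G k)"
      unfolding rows by (simp add: sum_distrib_right)
  qed
  also have "\<dots> = (\<Sum>r\<in>{0..<n}. \<Sum>k\<in>{k. k \<in> {1..n} \<and> k \<le> r}. a r / (real r + 1) * G k)"
    by (rule sum.swap_restrict) auto
  also have "\<dots> = (\<Sum>r\<in>{0..<n}. a r / (real r + 1) * (\<Sum>k\<in>{1..r}. G k))"
  proof (rule sum.cong[OF refl])
    fix r assume "r \<in> {0..<n}"
    then have "{k. k \<in> {1..n} \<and> k \<le> r} = {1..r}" by auto
    then show "(\<Sum>k\<in>{k. k \<in> {1..n} \<and> k \<le> r}. a r / (real r + 1) * G k) = a r / (real r + 1) * (\<Sum>k\<in>{1..r}. G k)"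
      by (simp add: sum_distrib_left)
  qed
  also have "\<dots> \<le> (\<Sum>r\<in>{0..<n}. a r / (real r + 1) * (4 * pi * (\<Sum>j=0..r. W (j+1))))"
  proof (rule sum_mono)
    fix r assume r: "r \<in> {0..<n}"
    have "(\<Sum>k\<in>{1..r}. G k) \<le> 4 * pi * (\<Sum>j=0..r. W (j+1))"
      unfolding G_def by (rule weighted_increments_bound) (use F0 FW W0 r in auto)
    then show "a r / (real r + 1) * (\<Sum>k\<in>{1..r}. G k) \<le> a r / (real r + 1) * (4 * pi * (\<Sum>j=0..r. W (j+1)))"
      using a0[of r] r by (intro mult_left_mono) auto
  qed
  also have "\<dots> \<le> (\<Sum>r=0..n. a r / (real r + 1) * (4 * pi * (\<Sum>j=0..r. W (j+1))))"
    using a0 W0 by (intro sum_mono2) (auto intro!: mult_nonneg_nonneg divide_nonneg_nonneg sum_nonneg)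
  also have "\<dots> = 4 * pi * rhs_real a W n"
    unfolding rhs_real_def by (simp add: sum_distrib_left algebra_simps)
  finally show ?thesis .
qed

text \<open>The complete discrete estimate: the kernel weights summed against the increments of \<open>F\<close>
  are bounded by a multiple of \<open>rhs_real\<close>; the last part of the weight uses hypothesis (i).\<close>
lemma kernel_weight_sum_bound:
  fixes a F W :: "nat \<Rightarrow> real"
  assumes a0: "\<And>r. r \<le> n \<Longrightarrow> 0 \<le> a r" and a1: "(\<Sum>r=0..n. a r) = 1"
    and ii: "\<And>s. s \<le> n \<Longrightarrow> (1 / (real s + 1)) * (\<Sum>r=0..s. a r) \<le> K2 * a s"
    and i: "a n \<le> K1 / (real n + 1)"
    and F0: "\<And>k. 1 \<le> k \<Longrightarrow> k \<le> n + 1 \<Longrightarrow> 0 \<le> F k"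
    and FW: "\<And>k. 1 \<le> k \<Longrightarrow> k \<le> n + 1 \<Longrightarrow> F k \<le> pi / real k * W k"
    and W0: "\<And>k. 0 \<le> W k" and dec: "\<And>k. 1 \<le> k \<Longrightarrow> W (Suc k) \<le> W k"
    and K: "0 \<le> K1" "0 \<le> K2" "0 \<le> K3"
  shows "(\<Sum>k\<in>{1..n}. kernel_weight a K3 n k * (F k - F (Suc k)))
      \<le> pi * (K2 + 1 + 8 * K3 + 8 * K1) * rhs_real a W n"
proof -
  define R where "R = rhs_real a W n"
  define head where "head = (\<Sum>k\<in>{1..n}. ((real k + 1) * (\<Sum>r\<in>{0..<k}. a r)) * (F k - F (Suc k)))"
  define middle where "middle = (\<Sum>k\<in>{1..n}. (real k + 1)^2 * (\<Sum>r\<in>{k..<n}. a r / (real r + 1)) * (F k - F (Suc k)))"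
  define last where "last = (\<Sum>k\<in>{1..n}. (real k + 1)^2 * (F k - F (Suc k)))"
  have "kernel_weight a K3 n k * (F k - F (Suc k))
      = ((real k + 1) * (\<Sum>r\<in>{0..<k}. a r)) * (F k - F (Suc k))
        + 2 * K3 * ((real k + 1)^2 * (\<Sum>r\<in>{k..<n}. a r / (real r + 1)) * (F k - F (Suc k)))
        + 2 * a n * ((real k + 1)^2 * (F k - F (Suc k)))" for k
    unfolding kernel_weight_def by (simp add: algebra_simps)
  then have split: "(\<Sum>k\<in>{1..n}. kernel_weight a K3 n k * (F k - F (Suc k))) = head + 2 * K3 * middle + 2 * a n * last"
    unfolding head_def middle_def last_def by (simp add: sum.distrib sum_distrib_left)
  have "head \<le> pi * (K2 + 1) * (\<Sum>r=0..n. a r * W (r+1))"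
    unfolding head_def by (rule head_part_bound[OF a0 ii F0 FW W0 K(2)])
  also have "\<dots> \<le> pi * (K2 + 1) * R"
    using rhs_real_lower_bounds(1)[where a=a and W=W, OF a0 a1 dec] K(2) unfolding R_def by (intro mult_left_mono) auto
  finally have b_head: "head \<le> pi * (K2 + 1) * R" .
  have b_middle: "2 * K3 * middle \<le> 2 * K3 * (4 * pi * R)"
    using middle_part_bound[OF a0 F0 FW W0] K(3) unfolding middle_def R_def by (intro mult_left_mono) auto
  have "2 * a n * last \<le> 2 * a n * (4 * pi * (\<Sum>j=0..n. W (j+1)))"
    using weighted_increments_bound[of n F W] F0 FW W0 a0[of n]
    unfolding last_def by (intro mult_left_mono) auto
  also have "\<dots> \<le> 2 * (K1 / (real n + 1)) * (4 * pi * (\<Sum>j=0..n. W (j+1)))"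
    using i W0 by (intro mult_right_mono) (auto intro!: sum_nonneg mult_nonneg_nonneg)
  also have "\<dots> = 8 * pi * K1 * ((1 / (real n + 1)) * (\<Sum>j=0..n. W (j+1)))" by simp
  also have "\<dots> \<le> 8 * pi * K1 * R"
    using rhs_real_lower_bounds(2)[where a=a and W=W, OF a0 a1 dec] K(1) unfolding R_def by (intro mult_left_mono) auto
  finally have b_last: "2 * a n * last \<le> 8 * pi * K1 * R" .
  show ?thesis
    using split b_head b_middle b_last unfolding R_def by (simp add: algebra_simps)
qed

section \<open>The estimate for a finite modulus\<close>

definition matrix_hyps :: "real \<Rightarrow> real \<Rightarrow> real \<Rightarrow> (nat \<Rightarrow> nat \<Rightarrow> real) \<Rightarrow> (nat \<Rightarrow> nat \<Rightarrow> real) \<Rightarrow> bool" where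
  "matrix_hyps K1 K2 K3 a b \<longleftrightarrow> admissible_matrix a \<and> admissible_matrix b \<and>
     (\<forall>n. a n n \<le> K1 / (real n + 1)) \<and>
     (\<forall>n s. s \<le> n \<longrightarrow> (1 / (real s + 1)) * (\<Sum>r=0..s. a n r) \<le> K2 * a n s) \<and>
     (\<forall>n r l. l \<le> r \<and> r + 1 \<le> n \<longrightarrow>
        \<bar>a n r * b r (r - l) - a n (r + 1) * b (r + 1) (r + 1 - l)\<bar> \<le> K3 * a n r / (real r + 1)^2)"

definition psi_mass :: "(real \<Rightarrow> real) \<Rightarrow> real \<Rightarrow> real \<Rightarrow> real" where
  "psi_mass f x \<delta> = integral {0..\<delta>} (\<lambda>u. \<bar>psi f x u\<bar>)"

lemma psi_mass_nonneg:
  assumes "L1 f"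
  shows "0 \<le> psi_mass f x \<delta>"
  unfolding psi_mass_def by (rule integral_nonneg[OF abs_psi_integrable_on[OF assms]]) auto

lemma psi_mass_increment:
  assumes "L1 f" "0 \<le> c" "c \<le> d"
  shows "integral {c..d} (\<lambda>u. \<bar>psi f x u\<bar>) = psi_mass f x d - psi_mass f x c"
  using Henstock_Kurzweil_Integration.integral_combine[of 0 c d "\<lambda>u. \<bar>psi f x u\<bar>"]
    abs_psi_integrable_on[OF assms(1)] assms(2,3)
  unfolding psi_mass_def by simp

lemma abs_integral_le:
  fixes f g :: "real \<Rightarrow> real"
  assumes "f integrable_on S" "g integrable_on S" "\<And>x. x \<in> S \<Longrightarrow> \<bar>f x\<bar> \<le> g x"
  shows "\<bar>integral S f\<bar> \<le> integral S g"
  using integral_norm_bound_integral[of f S g] assms by simp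

lemma integral_split_harmonic:
  fixes g :: "real \<Rightarrow> real"
  assumes "g integrable_on {pi / (real n + 1)..pi}"
  shows "integral {pi / (real n + 1)..pi} g = (\<Sum>k\<in>{1..n}. integral {pi / (real k + 1)..pi / real k} g)"
  using assms
proof (induction n)
  case (Suc n)
  have le1: "pi / (real (Suc n) + 1) \<le> pi / (real n + 1)"
    by (rule divide_left_mono) (use pi_gt_zero in auto)
  have le2: "pi / (real n + 1) \<le> pi" using pi_gt_zero by (simp add: field_simps)
  have "integral {pi / (real (Suc n) + 1)..pi} g
      = integral {pi / (real (Suc n) + 1)..pi / (real n + 1)} g + integral {pi / (real n + 1)..pi} g"
    by (rule Henstock_Kurzweil_Integration.integral_combine[symmetric]) (use le1 le2 Suc.prems in auto)
  moreover have "g integrable_on {pi / (real n + 1)..pi}"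
    by (rule integrable_subinterval_real[OF Suc.prems]) (use le1 in auto)
  ultimately show ?case using Suc.IH by (simp add: add.commute)
qed simp

text \<open>Splitting at $d = \pi/(n+1)$, the difference of $\widetilde T_{n,A,B}f(x)$ and the truncated
  conjugate function is an integral against the mean kernel near the origin plus an integral
  against the difference kernel $-H_n(t)/(2\sin(t/2))$ away from it.\<close>
lemma T_AB_minus_trunc_rep:
  fixes n :: nat
  assumes L: "L1 f" and A: "admissible_matrix a" and B: "admissible_matrix b"
  defines "d \<equiv> pi / (real n + 1)"
  shows "T_AB a b f n x - conj_trunc f x d
     = - (1 / pi) * (integral {0..d} (\<lambda>t. psi f x t * mean_kernel a b n t)
          + integral {d..pi} (\<lambda>t. psi f x t * (- cos_mean a b n t / (2 * sin (t/2)))))"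
proof -
  let ?K = "\<lambda>t. psi f x t * mean_kernel a b n t" and ?C = "\<lambda>t. psi f x t * ((1/2) * cot (t/2))"
  have d: "0 < d" "d \<le> pi" unfolding d_def using pi_gt_zero by (simp_all add: field_simps)
  have intK: "?K integrable_on {c..e}" for c e
    by (rule psi_mult_continuous_integrable_on[OF L continuous_on_mean_kernel])
  have "integral {0..pi} ?K = integral {0..d} ?K + integral {d..pi} ?K"
    by (rule Henstock_Kurzweil_Integration.integral_combine[symmetric]) (use d intK in auto)
  then have T: "T_AB a b f n x = - (1 / pi) * (integral {0..d} ?K + integral {d..pi} ?K)"
    using T_AB_rep[OF L, of a b n x] by simp
  have diff: "integral {d..pi} ?K - integral {d..pi} ?C
      = integral {d..pi} (\<lambda>t. psi f x t * (- cos_mean a b n t / (2 * sin (t/2))))"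
  proof -
    have "integral {d..pi} ?K - integral {d..pi} ?C = integral {d..pi} (\<lambda>t. ?K t - ?C t)"
      by (rule integral_diff[symmetric]) (use intK conj_trunc_rep(1)[OF L d(1)] in auto)
    also have "\<dots> = integral {d..pi} (\<lambda>t. psi f x t * (- cos_mean a b n t / (2 * sin (t/2))))"
    proof (rule integral_cong)
      fix t assume "t \<in> {d..pi}"
      then have "sin (t/2) \<noteq> 0" using d by (intro order.strict_implies_not_eq[symmetric] sin_gt_zero) auto
      then have "mean_kernel a b n t - (1/2) * cot (t/2) = - cos_mean a b n t / (2 * sin (t/2))"
        by (rule mean_kernel_minus_half_cot[OF _ A B])
      moreover have "?K t - ?C t = psi f x t * (mean_kernel a b n t - (1/2) * cot (t/2))"
        by (simp add: right_diff_distrib)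
      ultimately show "?K t - ?C t = psi f x t * (- cos_mean a b n t / (2 * sin (t/2)))" by simp
    qed
    finally show ?thesis .
  qed
  have combine: "T = - (1 / pi) * (I0 + I1) \<Longrightarrow> c = - (1 / pi) * I2 \<Longrightarrow> I1 - I2 = I3
      \<Longrightarrow> T - c = - (1 / pi) * (I0 + I3)" for T c I0 I1 I2 I3 :: real
    by (simp add: algebra_simps add_divide_distrib)
  show ?thesis by (rule combine[OF T conj_trunc_rep(2)[OF L d(1)] diff])
qed

text \<open>Near the origin the mean kernel is $O(n)$, so this part is at most $\pi^2$ times the average
  of $|\psi_x|$ over $[0,\pi/(n+1)]$.\<close>
lemma near_part_bound:
  fixes n :: nat
  assumes L: "L1 f" and A: "admissible_matrix a" and B: "admissible_matrix b"
  defines "d \<equiv> pi / (real n + 1)"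
  shows "\<bar>integral {0..d} (\<lambda>t. psi f x t * mean_kernel a b n t)\<bar> \<le> pi * pi * (psi_mass f x d / d)"
proof -
  have "\<bar>integral {0..d} (\<lambda>t. psi f x t * mean_kernel a b n t)\<bar>
      \<le> integral {0..d} (\<lambda>t. \<bar>psi f x t\<bar> * (real n * pi))"
  proof (rule abs_integral_le)
    show "(\<lambda>t. psi f x t * mean_kernel a b n t) integrable_on {0..d}"
      by (rule psi_mult_continuous_integrable_on[OF L continuous_on_mean_kernel])
    show "(\<lambda>t. \<bar>psi f x t\<bar> * (real n * pi)) integrable_on {0..d}"
      using abs_psi_integrable_on[OF L] by (rule integrable_on_mult_left)
    fix t assume "t \<in> {0..d}"
    then have "\<bar>mean_kernel a b n t\<bar> \<le> real n * pi" using mean_kernel_small[OF A B] unfolding d_def by auto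
    then show "\<bar>psi f x t * mean_kernel a b n t\<bar> \<le> \<bar>psi f x t\<bar> * (real n * pi)"
      by (simp add: abs_mult mult_left_mono)
  qed
  also have "\<dots> = real n * pi * psi_mass f x d"
    unfolding psi_mass_def by (simp add: mult.commute)
  also have "\<dots> = (real n * d) * pi * (psi_mass f x d / d)"
  proof -
    have "d \<noteq> 0" unfolding d_def by simp
    then show ?thesis by (simp add: field_simps)
  qed
  also have "\<dots> \<le> pi * pi * (psi_mass f x d / d)"
  proof (rule mult_right_mono)
    have "real n * d \<le> pi" unfolding d_def using pi_gt_zero by (simp add: field_simps)
    then show "real n * d * pi \<le> pi * pi" by (simp add: mult_right_mono)
    show "0 \<le> psi_mass f x d / d" using psi_mass_nonneg[OF L, of x d] unfolding d_def by simp
  qed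
  finally show ?thesis .
qed

text \<open>On each piece $[\pi/(k+1),\pi/k]$ away from the origin the difference kernel is bounded by
  the kernel weight, which multiplies the mass of $|\psi_x|$ on that piece.\<close>
lemma far_piece_bound:
  assumes L: "L1 f" and A: "admissible_matrix a" and B: "admissible_matrix b"
   and iii: "\<forall>n r l. l \<le> r \<and> r + 1 \<le> n \<longrightarrow>
            \<bar>a n r * b r (r - l) - a n (r + 1) * b (r + 1) (r + 1 - l)\<bar>
              \<le> K3 * a n r / (real r + 1)^2"
   and K3: "K3 > 0" and k: "k \<in> {1..n}"
  shows "integral {pi / (real k + 1)..pi / real k} (\<lambda>t. \<bar>psi f x t\<bar> * (\<bar>cos_mean a b n t\<bar> / (2 * sin (t/2))))
     \<le> kernel_weight (a n) K3 n k * (psi_mass f x (pi / real k) - psi_mass f x (pi / real (Suc k)))"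
proof -
  let ?M = "kernel_weight (a n) K3 n k"
  have le: "pi / (real k + 1) \<le> pi / real k" using k by (intro divide_left_mono) auto
  have sin_ne: "sin (t/2) \<noteq> 0" if "t \<in> {pi / (real k + 1)..pi / real k}" for t
    using sin_half_on_piece(1)[of k t] that k by auto
  have "integral {pi / (real k + 1)..pi / real k} (\<lambda>t. \<bar>psi f x t\<bar> * (\<bar>cos_mean a b n t\<bar> / (2 * sin (t/2))))
      \<le> integral {pi / (real k + 1)..pi / real k} (\<lambda>t. \<bar>psi f x t\<bar> * ?M)"
  proof (rule integral_le)
    have "continuous_on {pi / (real k + 1)..pi / real k} (\<lambda>t. \<bar>cos_mean a b n t\<bar> / (2 * sin (t/2)))"
      using sin_ne by (auto intro!: continuous_intros continuous_on_cos_mean[THEN continuous_on_subset])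
    then show "(\<lambda>t. \<bar>psi f x t\<bar> * (\<bar>cos_mean a b n t\<bar> / (2 * sin (t/2)))) integrable_on {pi / (real k + 1)..pi / real k}"
      by (rule abs_psi_mult_continuous_integrable_on[OF L])
    show "(\<lambda>t. \<bar>psi f x t\<bar> * ?M) integrable_on {pi / (real k + 1)..pi / real k}"
      using abs_psi_integrable_on[OF L] by (rule integrable_on_mult_left)
    fix t assume "t \<in> {pi / (real k + 1)..pi / real k}"
    then have "\<bar>cos_mean a b n t\<bar> / (2 * sin (t/2)) \<le> ?M"
      using cos_mean_bound[OF A B iii K3] k by auto
    then show "\<bar>psi f x t\<bar> * (\<bar>cos_mean a b n t\<bar> / (2 * sin (t/2))) \<le> \<bar>psi f x t\<bar> * ?M"
      by (intro mult_left_mono) auto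
  qed
  also have "\<dots> = ?M * (psi_mass f x (pi / real k) - psi_mass f x (pi / real (Suc k)))"
    using psi_mass_increment[OF L _ le, of x] by (simp add: add.commute mult.commute)
  finally show ?thesis .
qed

lemma far_part_bound:
  fixes x :: real
  assumes L: "L1 f" and A: "admissible_matrix a" and B: "admissible_matrix b"
   and iii: "\<forall>n r l. l \<le> r \<and> r + 1 \<le> n \<longrightarrow>
            \<bar>a n r * b r (r - l) - a n (r + 1) * b (r + 1) (r + 1 - l)\<bar>
              \<le> K3 * a n r / (real r + 1)^2"
   and K3: "K3 > 0"
  defines "F \<equiv> \<lambda>k. psi_mass f x (pi / real k)"
  shows "\<bar>integral {pi / (real n + 1)..pi} (\<lambda>t. psi f x t * (- cos_mean a b n t / (2 * sin (t/2))))\<bar>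
     \<le> (\<Sum>k\<in>{1..n}. kernel_weight (a n) K3 n k * (F k - F (Suc k)))"
proof -
  define g where "g t = \<bar>psi f x t\<bar> * (\<bar>cos_mean a b n t\<bar> / (2 * sin (t/2)))" for t
  define d where "d = pi / (real n + 1)"
  have d: "0 < d" unfolding d_def by simp
  have sin_pos: "0 < sin (t/2)" if "t \<in> {d..pi}" for t
    using that d by (intro sin_gt_zero) auto
  then have sin_ne: "sin (t/2) \<noteq> 0" if "t \<in> {d..pi}" for t
    using that by force
  have "continuous_on {d..pi} (\<lambda>t. \<bar>cos_mean a b n t\<bar> / (2 * sin (t/2)))"
    using sin_ne by (auto intro!: continuous_intros continuous_on_cos_mean[THEN continuous_on_subset])
  then have g_int: "g integrable_on {d..pi}"
    unfolding g_def by (rule abs_psi_mult_continuous_integrable_on[OF L])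
  have "\<bar>integral {d..pi} (\<lambda>t. psi f x t * (- cos_mean a b n t / (2 * sin (t/2))))\<bar> \<le> integral {d..pi} g"
  proof (rule abs_integral_le[OF _ g_int])
    have "continuous_on {d..pi} (\<lambda>t. - cos_mean a b n t / (2 * sin (t/2)))"
      using sin_ne by (auto intro!: continuous_intros continuous_on_cos_mean[THEN continuous_on_subset])
    then show "(\<lambda>t. psi f x t * (- cos_mean a b n t / (2 * sin (t/2)))) integrable_on {d..pi}"
      by (rule psi_mult_continuous_integrable_on[OF L])
    fix t assume "t \<in> {d..pi}"
    then have "0 < sin (t/2)" by (rule sin_pos)
    then show "\<bar>psi f x t * (- cos_mean a b n t / (2 * sin (t/2)))\<bar> \<le> g t"
      by (simp add: g_def abs_mult)
  qed
  also have "\<dots> = (\<Sum>k\<in>{1..n}. integral {pi / (real k + 1)..pi / real k} g)"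
    using g_int unfolding d_def by (rule integral_split_harmonic)
  also have "\<dots> \<le> (\<Sum>k\<in>{1..n}. kernel_weight (a n) K3 n k * (F k - F (Suc k)))"
    unfolding g_def F_def by (intro sum_mono far_piece_bound[OF L A B iii K3])
  finally show ?thesis unfolding d_def .
qed

lemma matrix_hypsD:
  assumes "matrix_hyps K1 K2 K3 a b"
  shows "admissible_matrix a" "admissible_matrix b" "a n n \<le> K1 / (real n + 1)"
    "s \<le> n \<Longrightarrow> (1 / (real s + 1)) * (\<Sum>r=0..s. a n r) \<le> K2 * a n s"
    "\<forall>n r l. l \<le> r \<and> r + 1 \<le> n \<longrightarrow>
        \<bar>a n r * b r (r - l) - a n (r + 1) * b (r + 1) (r + 1 - l)\<bar> \<le> K3 * a n r / (real r + 1)^2"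
  using assms unfolding matrix_hyps_def by blast+

text \<open>The first estimate, with the moduli replaced by any nonnegative nonincreasing sequence \<open>W\<close>
  that dominates the averages of $|\psi_x|$ on $[0,t]$ for $t \le \pi/k$.\<close>
lemma finite_modulus_estimate:
  fixes W :: "nat \<Rightarrow> real"
  assumes L: "L1 f" and hyps: "matrix_hyps K1 K2 K3 a b" and K: "K1 > 0" "K2 > 0" "K3 > 0"
   and WF: "\<And>k t. 1 \<le> k \<Longrightarrow> 0 < t \<Longrightarrow> t \<le> pi / real k \<Longrightarrow> psi_mass f x t / t \<le> W k"
   and W0: "\<And>k. 0 \<le> W k" and dec: "\<And>k. 1 \<le> k \<Longrightarrow> W (Suc k) \<le> W k"
  shows "\<bar>T_AB a b f n x - conj_trunc f x (pi / (real n + 1))\<bar>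
     \<le> (5 + K2 + 8 * K3 + 8 * K1) * rhs_real (a n) W n"
proof -
  note A = matrix_hypsD(1)[OF hyps] and B = matrix_hypsD(2)[OF hyps]
  have an: "\<And>r. r \<le> n \<Longrightarrow> 0 \<le> a n r" and sa: "(\<Sum>r=0..n. a n r) = 1"
    using A unfolding admissible_matrix_def by auto
  define F where "F k = psi_mass f x (pi / real k)" for k
  define R where "R = rhs_real (a n) W n"
  define C where "C = K2 + 1 + 8 * K3 + 8 * K1"
  define near where "near = integral {0..pi / (real n + 1)} (\<lambda>t. psi f x t * mean_kernel a b n t)"
  define far where "far = integral {pi / (real n + 1)..pi} (\<lambda>t. psi f x t * (- cos_mean a b n t / (2 * sin (t/2))))"
  have FW: "F k \<le> pi / real k * W k" if "1 \<le> k" for k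
    using WF[OF that, of "pi / real k"] that unfolding F_def by (simp add: field_simps)
  have R0: "0 \<le> R"
    unfolding R_def rhs_real_def using an W0 by (auto intro!: sum_nonneg mult_nonneg_nonneg divide_nonneg_nonneg)
  have "\<bar>near\<bar> \<le> pi * pi * (psi_mass f x (pi / (real n + 1)) / (pi / (real n + 1)))"
    unfolding near_def by (rule near_part_bound[OF L A B])
  also have "\<dots> \<le> pi * pi * W (n+1)"
    using WF[of "n+1" "pi / (real n + 1)"] by (intro mult_left_mono) (auto simp: add.commute)
  also have "\<dots> \<le> pi * pi * R"
    using rhs_real_lower_bounds(3)[where a="a n" and W=W, OF an sa dec] unfolding R_def by simp
  finally have near_bd: "\<bar>near\<bar> \<le> pi * pi * R" .
  have "\<bar>far\<bar> \<le> (\<Sum>k\<in>{1..n}. kernel_weight (a n) K3 n k * (F k - F (Suc k)))"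
    unfolding far_def F_def by (rule far_part_bound[OF L A B matrix_hypsD(5)[OF hyps] K(3)])
  also have "\<dots> \<le> pi * C * R"
    unfolding R_def C_def
  proof (rule kernel_weight_sum_bound[OF an sa])
    show "\<And>s. s \<le> n \<Longrightarrow> 1 / (real s + 1) * sum (a n) {0..s} \<le> K2 * a n s"
      by (rule matrix_hypsD(4)[OF hyps])
    show "a n n \<le> K1 / (real n + 1)" by (rule matrix_hypsD(3)[OF hyps])
    show "\<And>k. 1 \<le> k \<Longrightarrow> k \<le> n + 1 \<Longrightarrow> 0 \<le> F k"
      unfolding F_def by (rule psi_mass_nonneg[OF L])
  qed (use K W0 dec FW in auto)
  finally have far_bd: "\<bar>far\<bar> \<le> pi * C * R" .
  have "\<bar>T_AB a b f n x - conj_trunc f x (pi / (real n + 1))\<bar> = (1 / pi) * \<bar>near + far\<bar>"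
    unfolding T_AB_minus_trunc_rep[OF L A B] near_def far_def by (simp add: abs_mult)
  also have "\<dots> \<le> (1 / pi) * (pi * pi * R + pi * C * R)"
    using near_bd far_bd abs_triangle_ineq[of near far] by (intro mult_left_mono) auto
  also have "\<dots> = (pi + C) * R" by (simp add: field_simps)
  also have "\<dots> \<le> (5 + K2 + 8 * K3 + 8 * K1) * R"
    using R0 pi_less_4 unfolding C_def by (intro mult_right_mono) auto
  finally show ?thesis unfolding R_def .
qed

section \<open>Passing from the truncated to the full conjugate function\<close>

text \<open>Two truncations differ by the integral of $\psi_x\cdot\tfrac12\cot(t/2)$ over $[e,d]$,
  which is at most $\frac1\pi\int_e^d |\psi_x(t)|/t\,dt$.\<close>
lemma conj_trunc_difference:
  assumes L: "L1 f" and e: "0 < e" "e \<le> d" and d: "d \<le> pi"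
  shows "\<bar>conj_trunc f x e - conj_trunc f x d\<bar> \<le> (1/pi) * integral {e..d} (\<lambda>t. \<bar>psi f x t\<bar> * (1 / t))"
proof -
  define h where "h t = psi f x t * ((1/2) * cot (t/2))" for t
  have int: "h integrable_on {e..pi}" unfolding h_def by (rule conj_trunc_rep(1)[OF L e(1)])
  have "integral {e..pi} h = integral {e..d} h + integral {d..pi} h"
    by (rule Henstock_Kurzweil_Integration.integral_combine[symmetric]) (use e d int in auto)
  then have eq: "conj_trunc f x e - conj_trunc f x d = - (1/pi) * integral {e..d} h"
    using conj_trunc_rep(2)[OF L e(1), of x] conj_trunc_rep(2)[OF L, of d x] e
    unfolding h_def by (simp add: algebra_simps)
  have "\<bar>integral {e..d} h\<bar> \<le> integral {e..d} (\<lambda>t. \<bar>psi f x t\<bar> * (1 / t))"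
  proof (rule abs_integral_le)
    show "h integrable_on {e..d}" by (rule integrable_subinterval_real[OF int]) (use d in auto)
    show "(\<lambda>t. \<bar>psi f x t\<bar> * (1 / t)) integrable_on {e..d}"
      using e by (intro abs_psi_mult_continuous_integrable_on[OF L]) (auto intro!: continuous_intros)
    fix t assume "t \<in> {e..d}"
    then have "\<bar>(1/2) * cot (t/2)\<bar> \<le> 1 / t" using half_cot_bounds[of t] e d by auto
    then show "\<bar>h t\<bar> \<le> \<bar>psi f x t\<bar> * (1 / t)" unfolding h_def abs_mult by (rule mult_left_mono) simp
  qed
  then show ?thesis unfolding eq abs_mult using pi_gt_zero by (simp add: divide_right_mono)
qed

text \<open>On $[e,d]$ with $e>0$ the nonnegative Lebesgue integral in the hypothesis of the theorem
  agrees with the Henstock--Kurzweil integral used above.\<close>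
lemma nn_integral_abs_psi_div:
  assumes L: "L1 f" and e: "0 < e"
  shows "(\<integral>\<^sup>+ t. ennreal (\<bar>psi f x t\<bar> / t) * indicator {e..d} t \<partial>lborel)
      = ennreal (integral {e..d} (\<lambda>t. \<bar>psi f x t\<bar> * (1 / t)))"
proof -
  have "continuous_on {e..d} (\<lambda>t. 1 / t)" using e by (auto intro!: continuous_intros)
  then have si: "set_integrable lborel {e..d} (\<lambda>t. \<bar>psi f x t\<bar> * (1 / t))"
    by (rule set_integrable_mult_continuous[OF abs_psi_set_integrable[OF L]])
  have "(\<integral>\<^sup>+ t. ennreal (indicator {e..d} t *\<^sub>R (\<bar>psi f x t\<bar> * (1 / t))) \<partial>lborel)
      = ennreal (integral\<^sup>L lborel (\<lambda>t. indicator {e..d} t *\<^sub>R (\<bar>psi f x t\<bar> * (1 / t))))"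
    using si e unfolding set_integrable_def
    by (intro nn_integral_eq_integral AE_I2) (auto simp: indicator_def)
  moreover have "(\<lambda>t. ennreal (indicator {e..d} t *\<^sub>R (\<bar>psi f x t\<bar> * (1 / t))))
      = (\<lambda>t. ennreal (\<bar>psi f x t\<bar> / t) * indicator {e..d} t)"
    by (auto simp: indicator_def fun_eq_iff)
  moreover have "integral\<^sup>L lborel (\<lambda>t. indicator {e..d} t *\<^sub>R (\<bar>psi f x t\<bar> * (1 / t)))
      = integral {e..d} (\<lambda>t. \<bar>psi f x t\<bar> * (1 / t))"
    using set_integrable_HK(2)[OF si] unfolding set_lebesgue_integral_def by simp
  ultimately show ?thesis by simp
qed

lemma conj_trunc_limit_bound:
  assumes L: "L1 f" and lim: "((\<lambda>\<epsilon>. conj_trunc f x \<epsilon>) \<longlongrightarrow> Lv) (at_right 0)"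
    and d: "0 < d" "d \<le> pi" and B: "0 \<le> B"
    and hyp: "ennreal (1 / pi) * (\<integral>\<^sup>+ t\<in>{0<..d}. ennreal (\<bar>psi f x t\<bar> / t) \<partial>lborel) \<le> ennreal B"
  shows "\<bar>conj_trunc f x d - Lv\<bar> \<le> B"
proof -
  have close: "\<bar>conj_trunc f x e - conj_trunc f x d\<bar> \<le> B" if e: "0 < e" "e \<le> d" for e
  proof -
    define J where "J = integral {e..d} (\<lambda>t. \<bar>psi f x t\<bar> * (1 / t))"
    have J0: "0 \<le> J" unfolding J_def
      using e by (intro integral_nonneg abs_psi_mult_continuous_integrable_on[OF L]) (auto intro!: continuous_intros)
    have "ennreal J = (\<integral>\<^sup>+ t. ennreal (\<bar>psi f x t\<bar> / t) * indicator {e..d} t \<partial>lborel)"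
      unfolding J_def by (rule nn_integral_abs_psi_div[OF L e(1), symmetric])
    also have "\<dots> \<le> (\<integral>\<^sup>+ t\<in>{0<..d}. ennreal (\<bar>psi f x t\<bar> / t) \<partial>lborel)"
      by (intro nn_integral_mono) (use e in \<open>auto simp: indicator_def\<close>)
    finally have "ennreal (1/pi) * ennreal J \<le> ennreal B"
      using hyp by (meson dual_order.trans mult_left_mono zero_le)
    then have "J / pi \<le> B" using J0 B by (simp add: ennreal_mult'[symmetric] ennreal_le_iff)
    then show ?thesis using conj_trunc_difference[OF L e d(2), of x] unfolding J_def by simp
  qed
  have "((\<lambda>\<epsilon>. \<bar>conj_trunc f x \<epsilon> - conj_trunc f x d\<bar>) \<longlongrightarrow> \<bar>Lv - conj_trunc f x d\<bar>) (at_right 0)"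
    by (intro tendsto_intros lim)
  moreover have "eventually (\<lambda>\<epsilon>. \<bar>conj_trunc f x \<epsilon> - conj_trunc f x d\<bar> \<le> B) (at_right 0)"
    using eventually_at_right_real[OF d(1)] by eventually_elim (use close in auto)
  ultimately have "\<bar>Lv - conj_trunc f x d\<bar> \<le> B"
    by (intro tendsto_upperbound) auto
  then show ?thesis by simp
qed

section \<open>The moduli of continuity\<close>

lemma wbar_mod_upper:
  assumes "L1 f" "0 < t" "t \<le> d"
  shows "ereal (psi_mass f x t / t) \<le> wbar_mod f x d"
proof -
  have "ereal ((1 / t) * (LINT u:{0..t}|lborel. \<bar>psi f x u\<bar>)) \<le> wbar_mod f x d"
    unfolding wbar_mod_def by (rule SUP_upper) (use assms in auto)
  then show ?thesis using set_integrable_HK(2)[OF abs_psi_set_integrable[OF assms(1)]]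
    unfolding psi_mass_def by simp
qed

lemma wbar_mod_mono:
  assumes "d1 \<le> d2"
  shows "wbar_mod f x d1 \<le> wbar_mod f x d2"
  unfolding wbar_mod_def by (rule SUP_subset_mono) (use assms in auto)

lemma wbar_mod_nonneg:
  assumes "L1 f" "0 < d"
  shows "0 \<le> wbar_mod f x d"
  using wbar_mod_upper[OF assms(1,2) order_refl, of x] psi_mass_nonneg[OF assms(1), of x d] assms(2)
  by (meson divide_nonneg_pos ereal_less_eq(5) order_trans)

text \<open>If $\bar w_x f(\pi) = \infty$, then every term of the right-hand side is infinite (some
  $a_{n,r}$ is positive since the row sums to one), so the theorem holds trivially.\<close>
lemma rhs_sum_infinite:
  assumes A: "admissible_matrix a" and inf: "wbar_mod f x pi = \<infinity>"
  shows "rhs_sum a f n x = \<infinity>"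
proof -
  have an: "0 \<le> a n r" if "r \<le> n" for r using A that unfolding admissible_matrix_def by auto
  have "(\<Sum>r=0..n. a n r) = 1" using A unfolding admissible_matrix_def by auto
  then obtain r0 where r0: "r0 \<in> {0..n}" "a n r0 > 0"
    using an by (metis atLeastAtMost_iff le_less sum_nonpos zero_less_one not_le)
  have S: "(\<Sum>k=0..r. wbar_mod f x (pi / (real k + 1))) = \<infinity>" for r
    unfolding sum_Pinfty by (rule conjI, simp, rule bexI[of _ 0]) (use inf in auto)
  have "ereal (a n r0) * (ereal (1 / (real r0 + 1)) * (\<Sum>k=0..r0. wbar_mod f x (pi / (real k + 1)))) = \<infinity>"
    unfolding S using r0 by simp
  then show ?thesis unfolding rhs_sum_def sum_Pinfty using r0(1) by blast
qed

text \<open>Otherwise the moduli $W(k) = \bar w_x f(\pi/k)$ are finite real numbers, nonnegative,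
  nonincreasing, dominating the averages of $|\psi_x|$, and the right-hand side is \<open>rhs_real\<close>.\<close>
definition wbar_seq :: "(real \<Rightarrow> real) \<Rightarrow> real \<Rightarrow> nat \<Rightarrow> real" where
  "wbar_seq f x k = real_of_ereal (wbar_mod f x (pi / real k))"

lemma wbar_seq_eq:
  assumes L: "L1 f" and fin: "wbar_mod f x pi \<noteq> \<infinity>" and k: "1 \<le> k"
  shows "wbar_mod f x (pi / real k) = ereal (wbar_seq f x k)"
proof -
  have "wbar_mod f x (pi / real k) \<le> wbar_mod f x pi"
    using k by (intro wbar_mod_mono) (simp add: field_simps)
  moreover have "0 \<le> wbar_mod f x (pi / real k)" using k by (intro wbar_mod_nonneg[OF L]) simp
  ultimately show ?thesis unfolding wbar_seq_def using fin by (cases "wbar_mod f x (pi / real k)") auto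
qed

lemma wbar_seq_properties:
  assumes L: "L1 f" and fin: "wbar_mod f x pi \<noteq> \<infinity>"
  shows "0 \<le> wbar_seq f x k"
    and "1 \<le> k \<Longrightarrow> wbar_seq f x (Suc k) \<le> wbar_seq f x k"
    and "1 \<le> k \<Longrightarrow> 0 < t \<Longrightarrow> t \<le> pi / real k \<Longrightarrow> psi_mass f x t / t \<le> wbar_seq f x k"
    and "rhs_sum a f n x = ereal (rhs_real (a n) (wbar_seq f x) n)"
    and "w_mod f x (pi / (real n + 1)) \<le> wbar_seq f x (n+1)"
proof -
  note eq = wbar_seq_eq[OF L fin]
  show "0 \<le> wbar_seq f x k"
  proof (cases "k = 0")
    case True
    have "wbar_mod f x 0 = -\<infinity>" unfolding wbar_mod_def by (simp add: bot_ereal_def)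
    then show ?thesis unfolding wbar_seq_def using True by simp
  next
    case False
    then show ?thesis using wbar_mod_nonneg[OF L, of "pi / real k" x] eq[of k] by simp
  qed
  show "wbar_seq f x (Suc k) \<le> wbar_seq f x k" if "1 \<le> k"
    using wbar_mod_mono[of "pi / real (Suc k)" "pi / real k" f x] eq[of k] eq[of "Suc k"] that
    by (simp add: frac_le)
  show "psi_mass f x t / t \<le> wbar_seq f x k" if "1 \<le> k" "0 < t" "t \<le> pi / real k"
    using wbar_mod_upper[OF L that(2,3), of x] eq[OF that(1)] by simp
  have eq1: "wbar_mod f x (pi / (real j + 1)) = ereal (wbar_seq f x (j+1))" for j
    using eq[of "j+1"] by (simp add: add.commute)
  show "rhs_sum a f n x = ereal (rhs_real (a n) (wbar_seq f x) n)"
    unfolding rhs_sum_def rhs_real_def eq1 by simp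
  show "w_mod f x (pi / (real n + 1)) \<le> wbar_seq f x (n+1)"
    using wbar_mod_upper[OF L, of "pi / (real n + 1)" "pi / (real n + 1)" x] eq1[of n]
      set_integrable_HK(2)[OF abs_psi_set_integrable[OF L]]
    unfolding w_mod_def psi_mass_def by (simp add: field_simps)
qed

lemma truncated_estimate:
  assumes L: "L1 f" and hyps: "matrix_hyps K1 K2 K3 a b" and K: "K1 > 0" "K2 > 0" "K3 > 0"
  shows "ereal \<bar>T_AB a b f n x - conj_trunc f x (pi / (real n + 1))\<bar>
     \<le> ereal (5 + K2 + 8 * K3 + 8 * K1) * rhs_sum a f n x"
proof (cases "wbar_mod f x pi = \<infinity>")
  case True
  then show ?thesis using rhs_sum_infinite[OF matrix_hypsD(1)[OF hyps]] K by simp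
next
  case False
  note W = wbar_seq_properties[OF L False]
  show ?thesis
    using finite_modulus_estimate[where W="wbar_seq f x", OF L hyps K W(3) W(1) W(2)] unfolding W(4) by simp
qed

text \<open>The second statement: the extra hypothesis bounds the distance between the truncation at
  $\pi/(n+1)$ and $\widetilde f(x)$ by $K_4\,w_x f(\pi/(n+1)) \le K_4 W(n+1)$, which is again
  dominated by the right-hand side.\<close>
lemma limit_estimate:
  assumes L: "L1 f" and hyps: "matrix_hyps K1 K2 K3 a b" and K: "K1 > 0" "K2 > 0" "K3 > 0" "K4 > 0"
    and lim: "((\<lambda>\<epsilon>. conj_trunc f x \<epsilon>) \<longlongrightarrow> Lv) (at_right 0)"
    and tail: "ennreal (1 / pi) * (\<integral>\<^sup>+ t\<in>{0<..pi / (real n + 1)}. ennreal (\<bar>psi f x t\<bar> / t) \<partial>lborel)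
            \<le> ennreal (K4 * w_mod f x (pi / (real n + 1)))"
  shows "ereal \<bar>T_AB a b f n x - Lv\<bar> \<le> ereal (5 + K2 + 8 * K3 + 8 * K1 + K4) * rhs_sum a f n x"
proof (cases "wbar_mod f x pi = \<infinity>")
  case True
  then show ?thesis using rhs_sum_infinite[OF matrix_hypsD(1)[OF hyps]] K by simp
next
  case False
  note W = wbar_seq_properties[OF L False]
  define R where "R = rhs_real (a n) (wbar_seq f x) n"
  have an: "\<And>r. r \<le> n \<Longrightarrow> 0 \<le> a n r" and sa: "(\<Sum>r=0..n. a n r) = 1"
    using matrix_hypsD(1)[OF hyps] unfolding admissible_matrix_def by auto
  have main: "\<bar>T_AB a b f n x - conj_trunc f x (pi / (real n + 1))\<bar> \<le> (5 + K2 + 8 * K3 + 8 * K1) * R"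
    using finite_modulus_estimate[where W="wbar_seq f x", OF L hyps K(1-3) W(3) W(1) W(2)] unfolding R_def .
  have w0: "0 \<le> w_mod f x (pi / (real n + 1))"
    using psi_mass_nonneg[OF L] set_integrable_HK(2)[OF abs_psi_set_integrable[OF L]]
    unfolding w_mod_def psi_mass_def by simp
  have "\<bar>conj_trunc f x (pi / (real n + 1)) - Lv\<bar> \<le> K4 * w_mod f x (pi / (real n + 1))"
    using K(4) w0 pi_gt_zero by (intro conj_trunc_limit_bound[OF L lim _ _ _ tail]) (auto simp: field_simps)
  also have "\<dots> \<le> K4 * R"
  proof -
    have "w_mod f x (pi / (real n + 1)) \<le> R"
      using W(5)[of n] rhs_real_lower_bounds(3)[where a="a n" and W="wbar_seq f x", OF an sa W(2)]
      unfolding R_def by simp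
    then show ?thesis using K(4) by (simp add: mult_left_mono)
  qed
  finally have "\<bar>T_AB a b f n x - Lv\<bar> \<le> (5 + K2 + 8 * K3 + 8 * K1 + K4) * R"
    using main by (simp add: algebra_simps)
  then show ?thesis unfolding W(4) R_def by simp
qed

theorem theorem1:
  fixes K1 K2 K3 :: real
  assumes "K1 > 0" "K2 > 0" "K3 > 0"
  shows
   "(\<exists>C>0. \<forall>(f::real \<Rightarrow> real) a b.
        L1 f \<and> admissible_matrix a \<and> admissible_matrix b \<and>
        (\<forall>n. a n n \<le> K1 / (real n + 1)) \<and>
        (\<forall>n s. s \<le> n \<longrightarrow> (1 / (real s + 1)) * (\<Sum>r=0..s. a n r) \<le> K2 * a n s) \<and>
        (\<forall>n r l. l \<le> r \<and> r + 1 \<le> n \<longrightarrow>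
            \<bar>a n r * b r (r - l) - a n (r + 1) * b (r + 1) (r + 1 - l)\<bar>
              \<le> K3 * a n r / (real r + 1)^2)
      \<longrightarrow> (\<forall>n x. ereal \<bar>T_AB a b f n x - conj_trunc f x (pi / (real n + 1))\<bar>
                    \<le> ereal C * rhs_sum a f n x))
    \<and>
    (\<forall>K4>0. \<exists>C>0. \<forall>(f::real \<Rightarrow> real) a b x L.
        L1 f \<and> admissible_matrix a \<and> admissible_matrix b \<and>
        (\<forall>n. a n n \<le> K1 / (real n + 1)) \<and>
        (\<forall>n s. s \<le> n \<longrightarrow> (1 / (real s + 1)) * (\<Sum>r=0..s. a n r) \<le> K2 * a n s) \<and>
        (\<forall>n r l. l \<le> r \<and> r + 1 \<le> n \<longrightarrow>
            \<bar>a n r * b r (r - l) - a n (r + 1) * b (r + 1) (r + 1 - l)\<bar>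
              \<le> K3 * a n r / (real r + 1)^2) \<and>
        ((\<lambda>\<epsilon>. conj_trunc f x \<epsilon>) \<longlongrightarrow> L) (at_right 0) \<and>
        (\<forall>n::nat. ennreal (1 / pi) *
            (\<integral>\<^sup>+ t\<in>{0<..pi / (real n + 1)}. ennreal (\<bar>psi f x t\<bar> / t) \<partial>lborel)
            \<le> ennreal (K4 * w_mod f x (pi / (real n + 1))))
      \<longrightarrow> (\<forall>n. ereal \<bar>T_AB a b f n x - L\<bar> \<le> ereal C * rhs_sum a f n x))"
proof -
  define C where "C = 5 + K2 + 8 * K3 + 8 * K1"
  have C: "C > 0" using assms unfolding C_def by simp
  have first: "ereal \<bar>T_AB a b f n x - conj_trunc f x (pi / (real n + 1))\<bar> \<le> ereal C * rhs_sum a f n x"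
    if "L1 f" "matrix_hyps K1 K2 K3 a b" for f a b n x
    using truncated_estimate[OF that assms] unfolding C_def .
  have second: "ereal \<bar>T_AB a b f n x - Lv\<bar> \<le> ereal (C + K4) * rhs_sum a f n x"
    if "L1 f" "matrix_hyps K1 K2 K3 a b" "K4 > 0"
      "((\<lambda>\<epsilon>. conj_trunc f x \<epsilon>) \<longlongrightarrow> Lv) (at_right 0)"
      "ennreal (1 / pi) * (\<integral>\<^sup>+ t\<in>{0<..pi / (real n + 1)}. ennreal (\<bar>psi f x t\<bar> / t) \<partial>lborel)
         \<le> ennreal (K4 * w_mod f x (pi / (real n + 1)))"
    for f a b x Lv n K4
    using limit_estimate[OF that(1,2) assms that(3-5)] unfolding C_def .
  show ?thesis
    apply (intro conjI allI impI)
    subgoal by (intro exI[of _ C] conjI allI impI C) (use first in \<open>simp add: matrix_hyps_def\<close>)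
    subgoal for K4 using C
      by (intro exI[of _ "C + K4"] conjI allI impI) (use second in \<open>auto simp: matrix_hyps_def\<close>)
    done
qed

end
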